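(* Let $G=(V,E)$ be a connected undirected graph on $n$ nodes with minimum nodal degree $\delta$, let $N_i$ denote the set of neighbours of node $i$, let $K>0$, and let $\bar w_1,\dots,\bar w_n\in\mathbb{R}$ satisfy $\sum_i\bar w_i=0$. Consider solutions $\vec\phi^t\in\mathbb{R}^n$, $t\ge0$, of $$\dot\phi_i=\bar w_i+\frac{K}{n}\sum_{k\in N_i}\sin(\phi_k-\phi_i),\qquad i=1,\dots,n,$$ with initial phases satisfying $\sum_{i=1}^n\phi_i^0=0$. Let $D_0=\max_i\phi_i^0-\min_i\phi_i^0$, $\mathcal{E}_0=\sum_{i=1}^n(\phi_i^0)^2$, $\sigma(\bar w)=\sqrt{\sum_{i=1}^n\bar w_i^2}$, and $$L=\frac{1}{1+\sum_{(k,l)\in E^c}\mathrm{dist}(k,l)},$$ where $E^c$ is the set of unordered pairs of distinct nodes that are not edges of $G$, and $\mathrm{dist}(k,l)$ is the number of edges in a shortest path between $k$ and $l$ in $G$. Suppose $D$ is a constant with $0<D_0\le D\le\frac{\pi}{2}$, that $\mathcal{E}_0<\frac34 D^2$, that $$K\ge\frac{\sigma(\bar w)\, D}{\sqrt{\mathcal{E}_0}\,L\,\sin D},\qquad(\ast)$$ and that $$K\ge\frac{n\,|\bar w_i-\bar w_j|}{2\delta\,\sin\!\Bigl(\frac D2-\sqrt{\mathcal{E}_0-\frac{D^2}{2}}\Bigr)}\quad\text{for all }1\le i,j\le n.$$ Then $D_t:=\max_i\phi_i^t-\min_i\phi_i^t\le D$ for all $t\ge0$ (so the set $\{\vec\phi\in\mathbb{R}^n:\max_{i,j}|\phi_i-\phi_j|\le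 D,\ \sum_i\phi_i=0\}$ is positively invariant for this solution), and the system achieves frequency synchronization, i.e. the solution approaches the set $\{\vec\phi:\dot\phi_i=0,\ 1\le i\le n\}$. Moreover, when $\mathcal{E}_0<\frac{D^2}{2}$, the same conclusion holds assuming only condition $(\ast)$ on $K$ (together with $0<D_0\le D\le\frac\pi2$).
   Context: This is the Kuramoto model in a frame rotating with the mean natural frequency: $\bar w_i=w_i-\frac1n\sum_k w_k$. Along solutions $\sum_i\phi_i^t$ is constant, hence $0$ for all $t$. Frequency synchronization means convergence of the solution to the set of equilibria of this system. *)

theory Defs
  imports "HOL-Analysis.Analysis"
begin

definition undirected_graph :: "('n \<Rightarrow> 'n \<Rightarrow> bool) \<Rightarrow> bool" where
  "undirected_graph E \<longleftrightarrow> (\<forall>k l. E k l \<longrightarrow> E l k) \<and> (\<forall>k. \<not> E k k)"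

definition graph_connected :: "('n \<Rightarrow> 'n \<Rightarrow> bool) \<Rightarrow> bool" where
  "graph_connected E \<longleftrightarrow> (\<forall>k l. E\<^sup>*\<^sup>* k l)"

definition neighbours :: "('n \<Rightarrow> 'n \<Rightarrow> bool) \<Rightarrow> 'n \<Rightarrow> 'n set" where
  "neighbours E i = {k. E i k}"

definition min_degree :: "('n::finite \<Rightarrow> 'n \<Rightarrow> bool) \<Rightarrow> nat" where
  "min_degree E = (MIN i. card (neighbours E i))"

definition graph_dist :: "('n \<Rightarrow> 'n \<Rightarrow> bool) \<Rightarrow> 'n \<Rightarrow> 'n \<Rightarrow> nat" where
  "graph_dist E k l = (LEAST m. (E ^^ m) k l)"

text \<open>Sum of distances over unordered pairs of distinct non-adjacent nodes
  (each unordered pair appears twice among ordered pairs, hence the factor 1/2).\<close>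
definition nonedge_dist_sum :: "('n::finite \<Rightarrow> 'n \<Rightarrow> bool) \<Rightarrow> real" where
  "nonedge_dist_sum E =
     (\<Sum>k\<in>UNIV. \<Sum>l\<in>UNIV. if k \<noteq> l \<and> \<not> E k l then real (graph_dist E k l) else 0) / 2"

definition L_const :: "('n::finite \<Rightarrow> 'n \<Rightarrow> bool) \<Rightarrow> real" where
  "L_const E = 1 / (1 + nonedge_dist_sum E)"

definition kuramoto_rhs ::
  "('n::finite \<Rightarrow> 'n \<Rightarrow> bool) \<Rightarrow> real \<Rightarrow> real^'n \<Rightarrow> real^'n \<Rightarrow> real^'n" where
  "kuramoto_rhs E K w x =
     (\<chi> i. w $ i + K / real CARD('n) * (\<Sum>k\<in>neighbours E i. sin (x $ k - x $ i)))"

definition phase_spread :: "real^'n::finite \<Rightarrow> real" where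
  "phase_spread x = (MAX i. x $ i) - (MIN i. x $ i)"

end

theory Submission
  imports Defs
begin

text \<open>Along the solution we control the spread of the phases and the energy \<open>\<parallel>\<phi>\<parallel>\<^sup>2\<close>
  together. While the spread is at most \<open>D \<le> pi/2\<close>, the coupling satisfies
  \<open>x sin x \<ge> (sin D / D) x\<^sup>2\<close>, and a Poincare inequality for the graph (bounding
  \<open>(x\<^sub>k - x\<^sub>l)\<^sup>2\<close> along shortest paths, which is where \<open>L\<close> comes from) shows that
  condition \<open>(*)\<close> makes the energy decrease whenever it exceeds \<open>\<E>\<^sub>0\<close>.
  While the energy is at most \<open>\<E>\<^sub>0\<close>, at a first time when two phases are \<open>D\<close> apart
  these two use up energy \<open>D\<^sup>2/2\<close>, so the remaining phases and the midpoint of the two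
  are controlled by \<open>sqrt (\<E>\<^sub>0 - D\<^sup>2/2)\<close> (and no such time exists if
  \<open>\<E>\<^sub>0 < D\<^sup>2/2\<close>); then each neighbour pair pulls the two extreme nodes together by at least \<open>sin (D/2 - sqrt (\<E>\<^sub>0 - D\<^sup>2/2))\<close>, and the
  condition on \<open>\<bar>w\<^sub>i - w\<^sub>j\<bar>\<close> makes their distance decrease. Hence neither bound is
  ever violated. Finally the vector field is minus the gradient of a potential, which is bounded
  below on the bounded trajectory and decreases at rate \<open>\<parallel>\<phi>'\<parallel>\<^sup>2\<close>; away from the
  equilibria the speed is bounded below by compactness, so the trajectory approaches them.\<close>

lemma norm_square_vec: "(norm x)\<^sup>2 = (\<Sum>i\<in>UNIV. (x $ i)\<^sup>2)" for x :: "real^'n::finite"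
  unfolding power2_norm_eq_inner inner_vec_def inner_real_def by (simp add: power2_eq_square)

lemma sum_square_le_norm_square: "(\<Sum>i\<in>T. (x $ i)\<^sup>2) \<le> (norm x)\<^sup>2" for x :: "real^'n::finite"
  unfolding norm_square_vec by (intro sum_mono2) auto

lemma abs_diff_nth_le_sqrt2_mult_norm:
  fixes x :: "real^'n::finite"
  assumes "i \<noteq> j"
  shows "\<bar>x $ i - x $ j\<bar> \<le> sqrt 2 * norm x"
proof -
  have "(x $ i - x $ j)\<^sup>2 \<le> 2 * ((x $ i)\<^sup>2 + (x $ j)\<^sup>2)"
    using zero_le_power2[of "x $ i + x $ j"] by (simp add: power2_eq_square algebra_simps)
  also have "\<dots> \<le> 2 * (norm x)\<^sup>2"
    using sum_square_le_norm_square[where T = "{i, j}" and x = x] assms by simp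
  also have "\<dots> = (sqrt 2 * norm x)\<^sup>2" by (simp add: power_mult_distrib)
  finally show ?thesis by (simp add: power2_le_iff_abs_le)
qed

lemma sum_mult_le_norm_mult_norm: "(\<Sum>i\<in>UNIV. x $ i * w $ i) \<le> norm x * norm w" for x w :: "real^'n::finite"
  using norm_cauchy_schwarz[of x w] by (simp add: inner_vec_def)

lemma x_mult_cos_le_sin:
  fixes x :: real
  assumes "0 \<le> x" "x \<le> pi/2"
  shows "x * cos x \<le> sin x"
proof -
  have "(\<lambda>x. sin x - x * cos x) 0 \<le> (\<lambda>x. sin x - x * cos x) x"
  proof (rule DERIV_nonneg_imp_increasing_open[OF assms(1)])
    fix y :: real assume y: "0 < y" "y < x"
    have "DERIV (\<lambda>x. sin x - x * cos x) y :> y * sin y"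
      by (auto intro!: derivative_eq_intros)
    moreover have "0 \<le> y * sin y" using y assms by (intro mult_nonneg_nonneg sin_ge_zero) auto
    ultimately show "\<exists>d. DERIV (\<lambda>x. sin x - x * cos x) y :> d \<and> 0 \<le> d" by blast
  qed (intro continuous_intros)
  then show ?thesis by simp
qed

lemma mult_sin_le_mult_sin:
  fixes y D :: real
  assumes "0 < y" "y \<le> D" "D \<le> pi/2"
  shows "y * sin D \<le> D * sin y"
proof -
  have "(\<lambda>x. sin x / x) D \<le> (\<lambda>x. sin x / x) y"
  proof (rule DERIV_nonpos_imp_nonincreasing[OF assms(2)])
    fix x :: real assume x: "y \<le> x" "x \<le> D"
    have "DERIV (\<lambda>x. sin x / x) x :> (x * cos x - sin x) / (x * x)"
      using x assms by (auto intro!: derivative_eq_intros simp: mult.commute)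
    moreover have "(x * cos x - sin x) / (x * x) \<le> 0"
      using x_mult_cos_le_sin[of x] x assms by (intro divide_nonpos_nonneg) auto
    ultimately show "\<exists>d. DERIV (\<lambda>x. sin x / x) x :> d \<and> d \<le> 0" by blast
  qed
  then show ?thesis using assms by (simp add: field_simps)
qed

lemma sin_div_mult_square_le:
  fixes x D :: real
  assumes "\<bar>x\<bar> \<le> D" "0 < D" "D \<le> pi/2"
  shows "sin D / D * x\<^sup>2 \<le> x * sin x"
proof (cases "x = 0")
  case False
  have "\<bar>x\<bar> * sin D / D \<le> sin \<bar>x\<bar>"
    using mult_sin_le_mult_sin[of "\<bar>x\<bar>" D] assms False by (simp add: field_simps)
  then have "\<bar>x\<bar> * (\<bar>x\<bar> * sin D / D) \<le> \<bar>x\<bar> * sin \<bar>x\<bar>" by (rule mult_left_mono) simp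
  moreover have "x * sin x = \<bar>x\<bar> * sin \<bar>x\<bar>" by (cases "x \<ge> 0") auto
  moreover have "sin D / D * x\<^sup>2 = \<bar>x\<bar> * (\<bar>x\<bar> * sin D / D)"
    by (simp add: power2_eq_square abs_mult_self_eq)
  ultimately show ?thesis by (simp only:)
qed simp

lemma cos_ge_one_minus_square_half:
  fixes x :: real
  shows "1 - x\<^sup>2 / 2 \<le> cos x"
proof -
  have "(sin (x/2))\<^sup>2 \<le> (x/2)\<^sup>2"
    using abs_sin_x_le_abs_x[of "x/2"] by (metis abs_le_square_iff)
  then show ?thesis using cos_double_sin[of "x/2"] by (simp add: power2_eq_square field_simps)
qed

lemma cos_le_quartic:
  fixes x :: real
  assumes "0 \<le> x" "x \<le> pi"
  shows "2 * cos x \<le> 2 - x\<^sup>2 + x^4/4"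
proof -
  have "x/2 * cos (x/2) \<le> sin (x/2)" using x_mult_cos_le_sin[of "x/2"] assms by simp
  moreover have "0 \<le> cos (x/2)" using assms by (intro cos_ge_zero) auto
  ultimately have "(x/2 * cos (x/2))\<^sup>2 \<le> (sin (x/2))\<^sup>2"
    using assms by (intro power_mono) auto
  moreover have "(x/2 * cos (x/2))\<^sup>2 = x\<^sup>2/4 * (1 - (sin (x/2))\<^sup>2)"
    by (simp add: power_mult_distrib cos_squared_eq power_divide)
  moreover have "(sin (x/2))\<^sup>2 \<le> (x/2)\<^sup>2"
    using abs_sin_x_le_abs_x[of "x/2"] by (metis abs_le_square_iff)
  then have "x\<^sup>2/4 * (1 - x\<^sup>2/4) \<le> x\<^sup>2/4 * (1 - (sin (x/2))\<^sup>2)"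
    by (intro mult_left_mono) (auto simp: power_divide)
  ultimately have "x\<^sup>2/4 * (1 - x\<^sup>2/4) \<le> (sin (x/2))\<^sup>2" by linarith
  then show ?thesis using cos_double_sin[of "x/2"] by (simp add: field_simps power2_eq_square power4_eq_xxxx)
qed

text \<open>Since \<open>D/2 \<le> pi/4\<close>, \<open>cos (D/2) \<ge> sin (D/2)\<close>: a deficit of the cosines of \<open>p, q\<close>
  against \<open>x\<close> can be paid for by the surplus of the sines.\<close>
lemma sin_half_diff_pair_ge:
  fixes D x p q :: real
  assumes D: "0 < D" "D \<le> pi/2"
    and sin_gap: "sin p + sin q \<le> 2 * sin x"
    and gap: "2 * cos x - (cos p + cos q) \<le> 2 * sin x - (sin p + sin q)"
  shows "2 * sin (D/2 - x) \<le> sin (D/2 - p) + sin (D/2 - q)"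
    and "2 * cos x - (cos p + cos q) < 2 * sin x - (sin p + sin q)
      \<Longrightarrow> 2 * sin (D/2 - x) < sin (D/2 - p) + sin (D/2 - q)"
proof -
  have s: "0 < sin (D/2)" using D pi_gt3 by (intro sin_gt_zero) auto
  have "sin (D/2) \<le> sin (pi/2 - D/2)" using D by (intro sin_monotone_2pi_le) auto
  then have sc: "0 \<le> cos (D/2) - sin (D/2)" by (simp add: sin_cos_eq)
  have diff: "sin (D/2 - p) + sin (D/2 - q) - 2 * sin (D/2 - x)
      = sin (D/2) * ((cos p + cos q - 2 * cos x) + (2 * sin x - (sin p + sin q)))
        + (cos (D/2) - sin (D/2)) * (2 * sin x - (sin p + sin q))"
    by (simp add: sin_diff algebra_simps)
  have "0 \<le> (cos (D/2) - sin (D/2)) * (2 * sin x - (sin p + sin q))"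
    using sc sin_gap by simp
  moreover have "0 \<le> sin (D/2) * ((cos p + cos q - 2 * cos x) + (2 * sin x - (sin p + sin q)))"
    using s gap by simp
  ultimately show "2 * sin (D/2 - x) \<le> sin (D/2 - p) + sin (D/2 - q)" using diff by linarith
  assume "2 * cos x - (cos p + cos q) < 2 * sin x - (sin p + sin q)"
  then have "0 < sin (D/2) * ((cos p + cos q - 2 * cos x) + (2 * sin x - (sin p + sin q)))"
    using s by simp
  with \<open>0 \<le> (cos (D/2) - sin (D/2)) * _\<close> show "2 * sin (D/2 - x) < sin (D/2 - p) + sin (D/2 - q)"
    using diff by linarith
qed

lemma opposite_pair_gap:
  fixes x p :: real
  assumes x: "0 \<le> x" "x < 4/5" and p: "p\<^sup>2 \<le> 3/2 * x\<^sup>2"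
  shows "2 * cos x - 2 * cos p \<le> 2 * sin x"
    and "0 < x \<Longrightarrow> 2 * cos x - 2 * cos p < 2 * sin x"
proof -
  have "2 * cos x - 2 * cos p \<le> x\<^sup>2/2 + x^4/4"
    using cos_ge_one_minus_square_half[of p] cos_le_quartic[of x] p x pi_gt3 by linarith
  moreover have "x * (1 - x\<^sup>2/2) \<le> sin x"
    using x_mult_cos_le_sin[of x] cos_ge_one_minus_square_half[of x] x pi_gt3
      mult_left_mono[of "1 - x\<^sup>2/2" "cos x" x] by linarith
  moreover have "x\<^sup>2/2 + x^4/4 = x * (x/2 + x^3/4)"
    by (simp add: power2_eq_square power3_eq_cube power4_eq_xxxx algebra_simps)
  moreover have "x/2 + x^3/4 + x\<^sup>2 < 2"
    using x power_le_one[of x 3] power_le_one[of x 2] by linarith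
  then have "x * (x/2 + x^3/4) \<le> x * (2 - x\<^sup>2)"
    and "0 < x \<Longrightarrow> x * (x/2 + x^3/4) < x * (2 - x\<^sup>2)"
    using x by (auto intro: mult_left_mono)
  ultimately show "2 * cos x - 2 * cos p \<le> 2 * sin x"
    and "0 < x \<Longrightarrow> 2 * cos x - 2 * cos p < 2 * sin x"
    by (auto simp: algebra_simps)
qed

lemma sin_add_sin_le:
  fixes x p q :: real
  assumes x: "0 \<le> x" "x < 4/5" and pq: "\<bar>p + q\<bar> \<le> 3/2 * x" "\<bar>p - q\<bar> \<le> 2 * x"
  shows "sin p + sin q + 27/80 * x \<le> 2 * sin x"
proof -
  have x2: "x < pi/2" using x pi_gt3 by linarith
  have "- (3/2 * x) \<le> p + q" "p + q \<le> 3/2 * x" using pq(1) by linarith+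
  then have sin_m: "sin ((p + q)/2) \<le> sin (3/4 * x)"
    using x x2 pi_gt_zero by (intro sin_monotone_2pi_le) (argo, argo, argo)
  have sin_34: "0 \<le> sin (3/4 * x)" using x x2 by (intro sin_ge_zero) auto
  have cos_r: "0 \<le> cos ((p - q)/2)" "cos ((p - q)/2) \<le> 1" using pq x2 by (auto intro!: cos_ge_zero)
  have "sin ((p + q)/2) * cos ((p - q)/2) \<le> sin (3/4 * x)"
  proof (cases "sin ((p + q)/2) \<le> 0")
    case True
    then show ?thesis using cos_r sin_34 by (metis mult_nonpos_nonneg order_trans)
  next
    case False
    then have "sin ((p + q)/2) * cos ((p - q)/2) \<le> sin ((p + q)/2)"
      using cos_r by (intro mult_left_le) auto
    then show ?thesis using sin_m by linarith
  qed
  moreover have "sin p + sin q = 2 * sin ((p + q)/2) * cos ((p - q)/2)" by (simp add: sin_plus_sin)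
  ultimately have "sin p + sin q \<le> 2 * sin (3/4 * x)" by linarith
  moreover have "sin x - sin (3/4 * x) = 2 * sin (x/8) * cos (7/8 * x)"
    using sin_diff_sin[of x "3/4 * x"] by (simp add: field_simps)
  moreover have x_sq: "x\<^sup>2 \<le> 16/25" using x power_mono[of x "4/5" 2] by (simp add: power_divide)
  have "9/80 * x \<le> sin (x/8)"
  proof -
    have "9/10 \<le> cos (x/8)"
      using cos_ge_one_minus_square_half[of "x/8"] x_sq by (simp add: power_divide)
    then have "x/8 * (9/10) \<le> x/8 * cos (x/8)" using x by (intro mult_left_mono) auto
    then show ?thesis using x_mult_cos_le_sin[of "x/8"] x x2 by linarith
  qed
  moreover have "3/4 \<le> cos (7/8 * x)"
    using cos_ge_one_minus_square_half[of "7/8 * x"] x_sq by (simp add: power_mult_distrib power_divide)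
  ultimately have "9/80 * x * (3/4) \<le> sin (x/8) * cos (7/8 * x)"
    using x by (intro mult_mono) auto
  with \<open>sin p + sin q \<le> _\<close> \<open>sin x - sin (3/4 * x) = _\<close> show ?thesis by linarith
qed

lemma pair_gap:
  fixes x p q :: real
  assumes x: "0 \<le> x" "x < 4/5" and pq: "p\<^sup>2 + q\<^sup>2 \<le> 2 * x\<^sup>2"
    "\<bar>p + q\<bar> \<le> 3/2 * x" "\<bar>p - q\<bar> \<le> 2 * x"
  shows "sin p + sin q \<le> 2 * sin x"
    and "2 * cos x - (cos p + cos q) \<le> 2 * sin x - (sin p + sin q)"
    and "0 < x \<Longrightarrow> 2 * cos x - (cos p + cos q) < 2 * sin x - (sin p + sin q)"
proof -
  have sin_gap: "sin p + sin q + 27/80 * x \<le> 2 * sin x" using sin_add_sin_le[OF x pq(2,3)] .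
  then show "sin p + sin q \<le> 2 * sin x" using x by linarith
  have "2 * cos x - (cos p + cos q) \<le> x^4/4"
    using cos_ge_one_minus_square_half[of p] cos_ge_one_minus_square_half[of q]
      cos_le_quartic[of x] x pq(1) pi_gt3 by linarith
  moreover have "x^3/4 < 27/80" using power_strict_mono[of x "4/5" 3] x by (simp add: power_divide)
  then have "x * (x^3/4) \<le> x * (27/80)" and "0 < x \<Longrightarrow> x * (x^3/4) < x * (27/80)"
    using x mult_left_mono[of "x^3/4" "27/80" x] by simp_all
  then have "x^4/4 \<le> 27/80 * x" and "0 < x \<Longrightarrow> x^4/4 < 27/80 * x"
    by (simp_all add: power4_eq_xxxx power3_eq_cube algebra_simps)
  ultimately show "2 * cos x - (cos p + cos q) \<le> 2 * sin x - (sin p + sin q)"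
    and "0 < x \<Longrightarrow> 2 * cos x - (cos p + cos q) < 2 * sin x - (sin p + sin q)"
    using sin_gap by linarith+
qed

lemma shift_pair_bounds:
  fixes s u v \<xi> :: real
  assumes sq: "2 * s\<^sup>2 + u\<^sup>2 + v\<^sup>2 \<le> \<xi>\<^sup>2" and \<xi>: "0 \<le> \<xi>"
  shows "(u - s)\<^sup>2 + (s - v)\<^sup>2 \<le> 2 * \<xi>\<^sup>2" and "\<bar>(u - s) + (s - v)\<bar> \<le> 3/2 * \<xi>"
    and "\<bar>(u - s) - (s - v)\<bar> \<le> 2 * \<xi>"
proof -
  have "2 * \<xi>\<^sup>2 - ((u - s)\<^sup>2 + (s - v)\<^sup>2) \<ge> (u + s)\<^sup>2 + (v + s)\<^sup>2"
    using sq by (simp add: power2_eq_square algebra_simps)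
  then show "(u - s)\<^sup>2 + (s - v)\<^sup>2 \<le> 2 * \<xi>\<^sup>2" using zero_le_power2[of "u + s"] zero_le_power2[of "v + s"] by argo
  have "2 * (u\<^sup>2 + v\<^sup>2) - (u - v)\<^sup>2 = (u + v)\<^sup>2" by (simp add: power2_eq_square algebra_simps)
  moreover have "((u - s) + (s - v))\<^sup>2 = (u - v)\<^sup>2" "(3/2 * \<xi>)\<^sup>2 = 9/4 * \<xi>\<^sup>2"
    by (simp_all add: power_mult_distrib power_divide)
  ultimately have "((u - s) + (s - v))\<^sup>2 \<le> (3/2 * \<xi>)\<^sup>2"
    using sq zero_le_power2[of s] zero_le_power2[of "u + v"] zero_le_power2[of \<xi>] by argo
  then show "\<bar>(u - s) + (s - v)\<bar> \<le> 3/2 * \<xi>" using power2_le_iff_abs_le[of "3/2 * \<xi>"] \<xi> by simp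
  have "4 * (2 * s\<^sup>2 + u\<^sup>2 + v\<^sup>2) - (u + v - 2 * s)\<^sup>2 = (u - v)\<^sup>2 + 2 * (u + s)\<^sup>2 + 2 * (v + s)\<^sup>2"
    by (simp add: power2_eq_square algebra_simps)
  moreover have "((u - s) - (s - v))\<^sup>2 = (u + v - 2 * s)\<^sup>2" "(2 * \<xi>)\<^sup>2 = 4 * \<xi>\<^sup>2"
    by (simp_all add: power_mult_distrib algebra_simps)
  ultimately have "((u - s) - (s - v))\<^sup>2 \<le> (2 * \<xi>)\<^sup>2"
    using sq zero_le_power2[of "u - v"] zero_le_power2[of "u + s"] zero_le_power2[of "v + s"] by argo
  then show "\<bar>(u - s) - (s - v)\<bar> \<le> 2 * \<xi>" using power2_le_iff_abs_le[of "2 * \<xi>"] \<xi> by simp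
qed

section \<open>Graph distances and a Poincare inequality\<close>

lemma relpowp_shortest_walk:
  assumes "(R ^^ n) k l"
  defines "m \<equiv> LEAST m. (R ^^ m) k l"
  obtains v where "v 0 = k" "v m = l" "\<forall>j<m. R (v j) (v (Suc j))" "inj_on v {..m}"
proof -
  have "(R ^^ m) k l" unfolding m_def using assms(1) by (rule LeastI)
  then obtain v where v: "v 0 = k" "v m = l" "\<forall>j<m. R (v j) (v (Suc j))"
    by (auto simp: relpowp_fun_conv)
  have "inj_on v {..m}"
  proof (rule inj_onI, rule ccontr)
    fix a b assume ab: "a \<in> {..m}" "b \<in> {..m}" "v a = v b" "a \<noteq> b"
    define i where "i = min a b"
    define j where "j = max a b"
    have ij: "i < j" "j \<le> m" "v i = v j" using ab unfolding i_def j_def by (auto simp: min_def max_def)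
    \<comment> \<open>cut out the loop between positions \<open>i\<close> and \<open>j\<close>\<close>
    define v' where "v' t = (if t \<le> i then v t else v (t + (j - i)))" for t
    have "v' (m - (j - i)) = l"
    proof (cases "m - (j - i) \<le> i")
      case True
      then have "j = m" "m - (j - i) = i" using ij by auto
      then show ?thesis using v ij unfolding v'_def by simp
    qed (use v ij in \<open>auto simp: v'_def\<close>)
    moreover have "v' 0 = k" using v unfolding v'_def by simp
    moreover have "\<forall>t<m - (j - i). R (v' t) (v' (Suc t))"
    proof (intro allI impI)
      fix t assume t: "t < m - (j - i)"
      show "R (v' t) (v' (Suc t))"
      proof (cases "t < i")
        case True then show ?thesis using v(3) ij t unfolding v'_def by auto
      next
        case False
        then have "v' t = v (t + (j - i))" "v' (Suc t) = v (Suc (t + (j - i)))"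
          unfolding v'_def using ij by (cases "t = i"; auto)+
        moreover have "t + (j - i) < m" using t ij by auto
        ultimately show ?thesis using v(3) by simp
      qed
    qed
    ultimately have "(R ^^ (m - (j - i))) k l" by (auto simp: relpowp_fun_conv)
    moreover have "m - (j - i) < m" using ij by auto
    ultimately show False using not_less_Least[of "m - (j - i)" "\<lambda>m. (R ^^ m) k l"] unfolding m_def by blast
  qed
  with v that show ?thesis by blast
qed

lemma sum_sum_if_eq_sum_pairs:
  fixes g :: "'a::finite \<Rightarrow> 'a \<Rightarrow> real"
  shows "(\<Sum>a\<in>UNIV. \<Sum>b\<in>UNIV. if R a b then g a b else 0) = (\<Sum>p\<in>{p. R (fst p) (snd p)}. g (fst p) (snd p))"
proof -
  have "(\<Sum>a\<in>UNIV. \<Sum>b\<in>UNIV. if R a b then g a b else 0)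
      = (\<Sum>p\<in>UNIV \<times> UNIV. if R (fst p) (snd p) then g (fst p) (snd p) else 0)"
    by (simp add: sum.cartesian_product case_prod_beta)
  also have "\<dots> = (\<Sum>p\<in>{p. R (fst p) (snd p)}. g (fst p) (snd p))"
    by (simp add: sum.If_cases Collect_conj_eq[symmetric] UNIV_Times_UNIV)
  finally show ?thesis .
qed

text \<open>An injective walk uses every edge at most once in each direction.\<close>
lemma injective_walk_edge_sum_le:
  fixes g :: "'a::finite \<Rightarrow> 'a \<Rightarrow> real"
  assumes g_sym: "\<And>a b. g a b = g b a" and g_nonneg: "\<And>a b. 0 \<le> g a b"
    and R_sym: "\<And>a b. R a b \<Longrightarrow> R b a"
    and walk: "\<forall>j<m. R (v j) (v (Suc j))" and inj: "inj_on v {..m}"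
  shows "2 * (\<Sum>j<m. g (v j) (v (Suc j))) \<le> (\<Sum>a\<in>UNIV. \<Sum>b\<in>UNIV. if R a b then g a b else 0)"
proof -
  define f where "f j = (v j, v (Suc j))" for j
  define S where "S = f ` {..<m}"
  define G where "G p = g (fst p) (snd p)" for p
  have inj_f: "inj_on f {..<m}"
    using inj unfolding f_def by (auto intro!: inj_onI dest: inj_onD)
  have sum_S: "(\<Sum>j<m. g (v j) (v (Suc j))) = sum G S"
    unfolding S_def using sum.reindex[OF inj_f, of G] by (simp add: G_def f_def)
  have sum_swap: "sum G (prod.swap ` S) = sum G S"
    by (subst sum.reindex) (auto simp: G_def g_sym intro: inj_onI)
  have "S \<inter> prod.swap ` S = {}"
  proof (rule ccontr)
    assume "S \<inter> prod.swap ` S \<noteq> {}"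
    then obtain p where "p \<in> S" "p \<in> prod.swap ` S" by blast
    then obtain i j where "i < m" "j < m" "f i = prod.swap (f j)" unfolding S_def by auto
    then have "i = Suc j" "Suc i = j" using inj unfolding f_def by (auto dest: inj_onD)
    then show False by simp
  qed
  then have "2 * sum G S = sum G (S \<union> prod.swap ` S)"
    using sum.union_disjoint[of S "prod.swap ` S" G] sum_swap by (simp add: S_def)
  also have "\<dots> \<le> sum G {p. R (fst p) (snd p)}"
    using walk R_sym by (intro sum_mono2) (auto simp: G_def g_nonneg S_def f_def)
  finally show ?thesis using sum_S sum_sum_if_eq_sum_pairs[of R g] by (simp add: G_def)
qed

definition dirichlet_energy :: "('n::finite \<Rightarrow> 'n \<Rightarrow> bool) \<Rightarrow> ('n \<Rightarrow> real) \<Rightarrow> real" where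
  "dirichlet_energy R x = (\<Sum>a\<in>UNIV. \<Sum>b\<in>UNIV. if R a b then (x a - x b)\<^sup>2 else 0)"

lemma square_diff_le_graph_dist_mult_dirichlet_energy:
  fixes x :: "'n::finite \<Rightarrow> real"
  assumes R_sym: "\<And>a b. R a b \<Longrightarrow> R b a" and conn: "\<And>k l. R\<^sup>*\<^sup>* k l"
  shows "(x k - x l)\<^sup>2 \<le> real (graph_dist R k l) * dirichlet_energy R x / 2"
proof -
  define m where "m = graph_dist R k l"
  obtain n where "(R ^^ n) k l" using rtranclp_imp_relpowp[OF conn[of k l]] by blast
  then obtain v where v: "v 0 = k" "v m = l" "\<forall>j<m. R (v j) (v (Suc j))" "inj_on v {..m}"
    unfolding m_def graph_dist_def by (rule relpowp_shortest_walk)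
  have "x l - x k = (\<Sum>j<m. x (v (Suc j)) - x (v j))"
    using sum_lessThan_telescope[of "\<lambda>j. x (v j)" m] v by simp
  then have "(x k - x l)\<^sup>2 = (\<Sum>j<m. 1 * (x (v (Suc j)) - x (v j)))\<^sup>2"
    by (simp add: power2_commute[of "x k" "x l"])
  also have "\<dots> \<le> real m * (\<Sum>j<m. (x (v j) - x (v (Suc j)))\<^sup>2)"
    using Cauchy_Schwarz_ineq_sum[of "\<lambda>_. 1" "\<lambda>j. x (v (Suc j)) - x (v j)" "{..<m}"]
    by (simp add: power2_commute)
  also have "\<dots> \<le> real m * (dirichlet_energy R x / 2)"
    using injective_walk_edge_sum_le[where g = "\<lambda>a b. (x a - x b)\<^sup>2", OF _ _ R_sym v(3,4)]
    unfolding dirichlet_energy_def by (intro mult_left_mono) (auto simp: power2_commute)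
  finally show ?thesis unfolding m_def by simp
qed

lemma sum_pairs_square_diff:
  fixes x :: "'n::finite \<Rightarrow> real"
  shows "(\<Sum>a\<in>UNIV. \<Sum>b\<in>UNIV. (x a - x b)\<^sup>2)
    = 2 * real CARD('n) * (\<Sum>a\<in>UNIV. (x a)\<^sup>2) - 2 * (\<Sum>a\<in>UNIV. x a)\<^sup>2"
proof -
  have "(\<Sum>a\<in>UNIV. \<Sum>b\<in>UNIV. (x a - x b)\<^sup>2)
      = (\<Sum>a\<in>UNIV. \<Sum>b\<in>UNIV. (x a)\<^sup>2 + (x b)\<^sup>2 - 2 * (x a * x b))"
    by (simp add: power2_eq_square algebra_simps)
  also have "\<dots> = (\<Sum>a\<in>UNIV. real CARD('n) * (x a)\<^sup>2 + (\<Sum>b\<in>UNIV. (x b)\<^sup>2) - 2 * (x a * (\<Sum>b\<in>UNIV. x b)))"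
    by (simp add: sum.distrib sum_subtractf sum_distrib_left)
  also have "\<dots> = 2 * real CARD('n) * (\<Sum>a\<in>UNIV. (x a)\<^sup>2) - 2 * (\<Sum>a\<in>UNIV. x a)\<^sup>2"
    by (simp add: sum.distrib sum_subtractf sum_distrib_left[symmetric] sum_distrib_right[symmetric]
        power2_eq_square)
  finally show ?thesis .
qed

lemma sum_pairs_square_diff_le:
  fixes x :: "'n::finite \<Rightarrow> real"
  assumes R_sym: "\<And>a b. R a b \<Longrightarrow> R b a" and conn: "\<And>k l. R\<^sup>*\<^sup>* k l"
  shows "(\<Sum>a\<in>UNIV. \<Sum>b\<in>UNIV. (x a - x b)\<^sup>2) \<le> (1 + nonedge_dist_sum R) * dirichlet_energy R x"
proof -
  have split: "(x a - x b)\<^sup>2 = (if R a b then (x a - x b)\<^sup>2 else 0)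
      + (if a \<noteq> b \<and> \<not> R a b then (x a - x b)\<^sup>2 else 0)" for a b
    by auto
  have "(\<Sum>a\<in>UNIV. \<Sum>b\<in>UNIV. (x a - x b)\<^sup>2) = dirichlet_energy R x
      + (\<Sum>a\<in>UNIV. \<Sum>b\<in>UNIV. if a \<noteq> b \<and> \<not> R a b then (x a - x b)\<^sup>2 else 0)"
    unfolding dirichlet_energy_def by (subst split) (simp add: sum.distrib)
  also have "(\<Sum>a\<in>UNIV. \<Sum>b\<in>UNIV. if a \<noteq> b \<and> \<not> R a b then (x a - x b)\<^sup>2 else 0)
      \<le> (\<Sum>a\<in>UNIV. \<Sum>b\<in>UNIV. (if a \<noteq> b \<and> \<not> R a b then real (graph_dist R a b) else 0)
          * dirichlet_energy R x / 2)"
    using square_diff_le_graph_dist_mult_dirichlet_energy[OF R_sym conn] by (intro sum_mono) auto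
  also have "\<dots> = nonedge_dist_sum R * dirichlet_energy R x"
    unfolding nonedge_dist_sum_def by (simp add: sum_distrib_right[symmetric] sum_divide_distrib[symmetric])
  finally show ?thesis by (simp add: algebra_simps)
qed

lemma nonedge_dist_sum_nonneg: "0 \<le> nonedge_dist_sum E"
  unfolding nonedge_dist_sum_def by (auto intro!: sum_nonneg)

lemma L_const_pos: "0 < L_const E"
  unfolding L_const_def using nonedge_dist_sum_nonneg[of E] by simp

lemma dirichlet_energy_ge_L_const:
  fixes E :: "'n::finite \<Rightarrow> 'n \<Rightarrow> bool" and x :: "real^'n"
  assumes E_sym: "\<And>a b. E a b \<Longrightarrow> E b a" and conn: "\<And>k l. E\<^sup>*\<^sup>* k l"
    and sum_0: "(\<Sum>i\<in>UNIV. x $ i) = 0"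
  shows "2 * real CARD('n) * L_const E * (norm x)\<^sup>2 \<le> dirichlet_energy E (\<lambda>i. x $ i)"
proof -
  have "2 * real CARD('n) * (norm x)\<^sup>2 \<le> (1 + nonedge_dist_sum E) * dirichlet_energy E (\<lambda>i. x $ i)"
    using sum_pairs_square_diff_le[OF E_sym conn, of "\<lambda>i. x $ i"] sum_pairs_square_diff[of "\<lambda>i. x $ i"] sum_0
    by (simp add: norm_square_vec)
  moreover have "0 < 1 + nonedge_dist_sum E" using nonedge_dist_sum_nonneg[of E] by simp
  ultimately show ?thesis unfolding L_const_def by (simp add: field_simps)
qed

lemma neighbours_nonempty:
  assumes "E\<^sup>*\<^sup>* k l" "k \<noteq> l"
  shows "neighbours E k \<noteq> {}"
  using assms by (cases rule: converse_rtranclpE) (auto simp: neighbours_def)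

lemma card_neighbours_pos:
  fixes E :: "'n::finite \<Rightarrow> 'n \<Rightarrow> bool"
  assumes "E\<^sup>*\<^sup>* k l" "k \<noteq> l"
  shows "0 < card (neighbours E k)"
  using neighbours_nonempty[OF assms] by (simp add: card_gt_0_iff)

lemma min_degree_le: "min_degree E \<le> card (neighbours E i)"
  unfolding min_degree_def by (rule Min_le) auto

lemma min_degree_pos:
  fixes E :: "'n::finite \<Rightarrow> 'n \<Rightarrow> bool"
  assumes conn: "\<And>k l. E\<^sup>*\<^sup>* k l" and "(A::'n) \<noteq> B"
  shows "0 < min_degree E"
proof -
  have "min_degree E \<in> range (\<lambda>i. card (neighbours E i))"
    unfolding min_degree_def by (rule Min_in) auto
  moreover have "0 < card (neighbours E i)" for i
    using card_neighbours_pos[OF conn, of i] \<open>A \<noteq> B\<close> by (cases "i = A") blast+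
  ultimately show ?thesis by auto
qed

lemma graph_dist_ge_2:
  fixes E :: "'n::finite \<Rightarrow> 'n \<Rightarrow> bool"
  assumes conn: "E\<^sup>*\<^sup>* k l" and "k \<noteq> l" "\<not> E k l"
  shows "2 \<le> graph_dist E k l"
proof -
  obtain n where "(E ^^ n) k l" using rtranclp_imp_relpowp[OF conn] by blast
  then have walk: "(E ^^ graph_dist E k l) k l" unfolding graph_dist_def by (rule LeastI)
  show ?thesis
  proof (rule ccontr)
    assume "\<not> ?thesis"
    then have "graph_dist E k l = 0 \<or> graph_dist E k l = 1" by auto
    then show False using walk assms by auto
  qed
qed

lemma card_UNIV_eq_neighbours_non_neighbours:
  fixes E :: "'n::finite \<Rightarrow> 'n \<Rightarrow> bool"
  assumes irr: "\<And>a. \<not> E a a"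
  shows "CARD('n) = card (neighbours E k) + Suc (card {l. k \<noteq> l \<and> \<not> E k l})"
proof -
  have "UNIV = neighbours E k \<union> insert k {l. k \<noteq> l \<and> \<not> E k l}"
    unfolding neighbours_def by auto
  also have "card \<dots> = card (neighbours E k) + card (insert k {l. k \<noteq> l \<and> \<not> E k l})"
    using irr by (intro card_Un_disjoint) (auto simp: neighbours_def)
  finally show ?thesis by simp
qed

text \<open>Every non-neighbour of a node is at distance at least 2, so the non-neighbours of two
  non-adjacent nodes \<open>A, B\<close> contribute to the distance sum defining \<open>L_const\<close>.\<close>
lemma card_mult_L_const_le_degrees:
  fixes E :: "'n::finite \<Rightarrow> 'n \<Rightarrow> bool"
  assumes E_sym: "\<And>a b. E a b \<longleftrightarrow> E b a" and irr: "\<And>a. \<not> E a a" and conn: "\<And>k l. E\<^sup>*\<^sup>* k l"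
    and AB: "A \<noteq> B" "\<not> E A B"
  shows "2 * real CARD('n) * L_const E \<le> real (card (neighbours E A) + card (neighbours E B))"
proof -
  define row where "row k = (\<Sum>l\<in>UNIV. if k \<noteq> l \<and> \<not> E k l then real (graph_dist E k l) else 0)" for k
  define m where "m k = card {l. k \<noteq> l \<and> \<not> E k l}" for k
  have row_ge: "2 * real (m k) \<le> row k" for k
  proof -
    have "2 * real (m k) = (\<Sum>l\<in>UNIV. if k \<noteq> l \<and> \<not> E k l then 2 else 0)"
      by (simp add: sum.If_cases m_def)
    also have "\<dots> \<le> row k" unfolding row_def
      using graph_dist_ge_2[OF conn] by (intro sum_mono) (auto simp del: of_nat_numeral)
    finally show ?thesis .
  qed
  have "row A + row B = (\<Sum>k\<in>{A,B}. row k)" using AB by simp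
  also have "\<dots> \<le> (\<Sum>k\<in>UNIV. row k)" by (intro sum_mono2) (auto simp: row_def intro!: sum_nonneg)
  finally have nonedge: "real (m A + m B) \<le> nonedge_dist_sum E"
    using row_ge[of A] row_ge[of B] unfolding nonedge_dist_sum_def row_def by simp
  have "B \<in> {l. A \<noteq> l \<and> \<not> E A l}" "A \<in> {l. B \<noteq> l \<and> \<not> E B l}" using AB E_sym by auto
  then have "0 < m A" "0 < m B" unfolding m_def by (auto simp: card_gt_0_iff)
  then have m_ge: "2 \<le> m A + m B" by linarith
  have "0 < card (neighbours E A)" "0 < card (neighbours E B)"
    using card_neighbours_pos[where k = A and l = B] card_neighbours_pos[where k = B and l = A] conn AB by auto
  then have d_ge: "2 \<le> card (neighbours E A) + card (neighbours E B)" by linarith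
  have card: "2 * CARD('n) = card (neighbours E A) + card (neighbours E B) + 2 + (m A + m B)"
    using card_UNIV_eq_neighbours_non_neighbours[where E = E and k = A, OF irr]
      card_UNIV_eq_neighbours_non_neighbours[where E = E and k = B, OF irr]
    unfolding m_def by simp
  define d where "d = real (card (neighbours E A) + card (neighbours E B))"
  define M where "M = real (m A + m B)"
  have "0 \<le> (d - 2) * (M - 2)" using d_ge m_ge unfolding d_def M_def by (intro mult_nonneg_nonneg) auto
  then have "2 * real CARD('n) \<le> d * (1 + M)"
    using card d_ge m_ge unfolding d_def M_def by (simp add: algebra_simps)
  also have "\<dots> \<le> d * (1 + nonedge_dist_sum E)"
    using nonedge unfolding d_def M_def by (intro mult_left_mono) auto
  finally have "2 * real CARD('n) \<le> d * (1 + nonedge_dist_sum E)" .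
  then show ?thesis unfolding L_const_def d_def using nonedge_dist_sum_nonneg[of E] by (simp add: field_simps)
qed

section \<open>The Kuramoto vector field\<close>

lemma sum_neighbours_eq_sum_if:
  "(\<Sum>k\<in>neighbours E i. f k) = (\<Sum>k\<in>UNIV. if E i k then f k else (0::real))"
  for E :: "'n::finite \<Rightarrow> 'n \<Rightarrow> bool"
  unfolding neighbours_def by (simp add: sum.If_cases)

lemma sum_sum_if_antisym_eq_0:
  fixes E :: "'n::finite \<Rightarrow> 'n \<Rightarrow> bool" and f :: "'n \<Rightarrow> 'n \<Rightarrow> real"
  assumes E_sym: "\<And>a b. E a b \<longleftrightarrow> E b a" and antisym: "\<And>a b. f a b = - f b a"
  shows "(\<Sum>i\<in>UNIV. \<Sum>k\<in>UNIV. if E i k then f i k else 0) = 0"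
proof -
  let ?S = "\<Sum>i\<in>UNIV. \<Sum>k\<in>UNIV. if E i k then f i k else 0"
  have "?S = (\<Sum>k\<in>UNIV. \<Sum>i\<in>UNIV. if E i k then f i k else 0)" by (rule sum.swap)
  also have "\<dots> = (\<Sum>k\<in>UNIV. \<Sum>i\<in>UNIV. - (if E k i then f k i else 0))"
  proof (intro sum.cong refl)
    fix k i
    show "(if E i k then f i k else 0) = - (if E k i then f k i else 0)"
      using E_sym[of i k] antisym[of i k] by simp
  qed
  also have "\<dots> = - ?S" by (simp add: sum_negf)
  finally show ?thesis by simp
qed

lemma sum_kuramoto_rhs:
  fixes E :: "'n::finite \<Rightarrow> 'n \<Rightarrow> bool"
  assumes E_sym: "\<And>a b. E a b \<longleftrightarrow> E b a"
  shows "(\<Sum>i\<in>UNIV. kuramoto_rhs E K w x $ i) = (\<Sum>i\<in>UNIV. w $ i)"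
proof -
  have "(\<Sum>i\<in>UNIV. \<Sum>k\<in>UNIV. if E i k then sin (x $ k - x $ i) else 0) = 0"
    by (rule sum_sum_if_antisym_eq_0[OF E_sym]) (simp add: sin_minus[symmetric])
  moreover have "(\<Sum>i\<in>UNIV. kuramoto_rhs E K w x $ i) = (\<Sum>i\<in>UNIV. w $ i)
      + K / real CARD('n) * (\<Sum>i\<in>UNIV. \<Sum>k\<in>UNIV. if E i k then sin (x $ k - x $ i) else 0)"
    unfolding kuramoto_rhs_def sum_neighbours_eq_sum_if by (simp add: sum.distrib sum_distrib_left)
  ultimately show ?thesis by simp
qed

lemma sum_mult_kuramoto_rhs:
  fixes E :: "'n::finite \<Rightarrow> 'n \<Rightarrow> bool"
  assumes E_sym: "\<And>a b. E a b \<longleftrightarrow> E b a"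
  shows "(\<Sum>i\<in>UNIV. y $ i * kuramoto_rhs E K w x $ i) = (\<Sum>i\<in>UNIV. y $ i * w $ i)
     - K / (2 * real CARD('n))
       * (\<Sum>i\<in>UNIV. \<Sum>k\<in>UNIV. if E i k then (y $ k - y $ i) * sin (x $ k - x $ i) else 0)"
proof -
  define T where "T = (\<Sum>i\<in>UNIV. \<Sum>k\<in>UNIV. if E i k then y $ i * sin (x $ k - x $ i) else 0)"
  define Q where "Q = (\<Sum>i\<in>UNIV. \<Sum>k\<in>UNIV. if E i k then (y $ k - y $ i) * sin (x $ k - x $ i) else 0)"
  have antisym: "(\<Sum>i\<in>UNIV. \<Sum>k\<in>UNIV. if E i k then (y $ i + y $ k) * sin (x $ k - x $ i) else 0) = 0"
  proof (rule sum_sum_if_antisym_eq_0[OF E_sym])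
    fix a b
    show "(y $ a + y $ b) * sin (x $ b - x $ a) = - ((y $ b + y $ a) * sin (x $ a - x $ b))"
      using sin_minus[of "x $ a - x $ b"] by (simp add: algebra_simps)
  qed
  moreover have "(\<Sum>i\<in>UNIV. \<Sum>k\<in>UNIV. if E i k then (y $ i + y $ k) * sin (x $ k - x $ i) else 0)
      = 2 * T + Q"
  proof -
    have "(\<Sum>i\<in>UNIV. \<Sum>k\<in>UNIV. if E i k then (y $ i + y $ k) * sin (x $ k - x $ i) else 0)
      = (\<Sum>i\<in>UNIV. \<Sum>k\<in>UNIV. 2 * (if E i k then y $ i * sin (x $ k - x $ i) else 0)
                     + (if E i k then (y $ k - y $ i) * sin (x $ k - x $ i) else 0))"
      by (intro sum.cong refl) (auto simp: algebra_simps)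
    then show ?thesis unfolding T_def Q_def by (simp add: sum.distrib sum_distrib_left)
  qed
  ultimately have TQ: "T = - Q / 2" using antisym by simp
  have "(\<Sum>i\<in>UNIV. y $ i * kuramoto_rhs E K w x $ i) = (\<Sum>i\<in>UNIV. y $ i * w $ i) + K / real CARD('n) * T"
    unfolding T_def kuramoto_rhs_def sum_neighbours_eq_sum_if
    by (simp add: algebra_simps sum.distrib sum_distrib_left if_distrib cong: if_cong)
  then show ?thesis unfolding Q_def[symmetric] TQ by simp
qed

text \<open>The energy estimate: coupling pulls the phases towards their mean with rate governed by
  \<open>L_const\<close>, via \<open>x sin x \<ge> (sin D / D) x\<^sup>2\<close> and the Poincare inequality.\<close>
lemma sum_mult_kuramoto_rhs_le:
  fixes E :: "'n::finite \<Rightarrow> 'n \<Rightarrow> bool" and x w :: "real^'n"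
  assumes E_sym: "\<And>a b. E a b \<longleftrightarrow> E b a" and conn: "\<And>k l. E\<^sup>*\<^sup>* k l"
    and sum_0: "(\<Sum>i\<in>UNIV. x $ i) = 0" and D: "0 < D" "D \<le> pi/2"
    and spread: "\<And>i k. \<bar>x $ k - x $ i\<bar> \<le> D" and K: "0 < K"
  shows "(\<Sum>i\<in>UNIV. x $ i * kuramoto_rhs E K w x $ i)
     \<le> norm x * norm w - K * L_const E * (sin D / D) * (norm x)\<^sup>2"
proof -
  define Q where "Q = (\<Sum>i\<in>UNIV. \<Sum>k\<in>UNIV. if E i k then (x $ k - x $ i) * sin (x $ k - x $ i) else 0)"
  have "sin D / D * dirichlet_energy E (\<lambda>i. x $ i)
      = (\<Sum>i\<in>UNIV. \<Sum>k\<in>UNIV. if E i k then sin D / D * (x $ k - x $ i)\<^sup>2 else 0)"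
    unfolding dirichlet_energy_def sum_distrib_left by (intro sum.cong refl) (auto simp: power2_commute)
  also have "\<dots> \<le> Q"
    unfolding Q_def using sin_div_mult_square_le[OF spread D] by (intro sum_mono) auto
  finally have "sin D / D * dirichlet_energy E (\<lambda>i. x $ i) \<le> Q" .
  moreover have "sin D / D * (2 * real CARD('n) * L_const E * (norm x)\<^sup>2)
      \<le> sin D / D * dirichlet_energy E (\<lambda>i. x $ i)"
    using dirichlet_energy_ge_L_const[OF _ conn sum_0] E_sym D
    by (intro mult_left_mono divide_nonneg_pos sin_ge_zero) auto
  ultimately have "K * (sin D / D * (2 * real CARD('n) * L_const E * (norm x)\<^sup>2)) \<le> K * Q"
    using K by (intro mult_left_mono) auto
  then have "K * L_const E * (sin D / D) * (norm x)\<^sup>2 \<le> K / (2 * real CARD('n)) * Q"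
    by (simp add: field_simps)
  then show ?thesis
    using sum_mult_kuramoto_rhs[where E = E and y = x and x = x and K = K and w = w, OF E_sym] sum_mult_le_norm_mult_norm[of x w]
    unfolding Q_def by linarith
qed

lemma kuramoto_rhs_nth_diff:
  "kuramoto_rhs E K w x $ A - kuramoto_rhs E K w x $ B = (w $ A - w $ B) - K / real CARD('n)
     * ((\<Sum>k\<in>neighbours E A. sin (x $ A - x $ k)) + (\<Sum>l\<in>neighbours E B. sin (x $ l - x $ B)))"
  for E :: "'n::finite \<Rightarrow> 'n \<Rightarrow> bool"
proof -
  have "(\<Sum>k\<in>neighbours E A. sin (x $ k - x $ A)) = - (\<Sum>k\<in>neighbours E A. sin (x $ A - x $ k))"
    by (simp add: sum_negf[symmetric] sin_minus[symmetric])
  then show ?thesis unfolding kuramoto_rhs_def by (simp add: algebra_simps)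
qed

section \<open>Two extreme phases at distance D\<close>

lemma sum_add_sum_ge_pair_bound:
  fixes t u :: "'a \<Rightarrow> real"
  assumes fin: "finite N1" "finite N2"
    and t: "\<And>k. k \<in> N1 \<Longrightarrow> 0 \<le> t k" and u: "\<And>l. l \<in> N2 \<Longrightarrow> 0 \<le> u l"
    and d: "0 \<le> d" "d \<le> real (card N1)" "d \<le> real (card N2)"
    and pair: "\<And>k l. k \<in> N1 \<Longrightarrow> l \<in> N2 \<Longrightarrow> P \<le> t k + u l"
  shows "d * P \<le> sum t N1 + sum u N2"
    and "0 < d \<Longrightarrow> (\<And>k l. k \<in> N1 \<Longrightarrow> l \<in> N2 \<Longrightarrow> P < t k + u l) \<Longrightarrow> d * P < sum t N1 + sum u N2"
proof -
  \<comment> \<open>bound every summand by the minimal one\<close>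
  have min_pair: "\<exists>k\<in>N1. \<exists>l\<in>N2. d * (t k + u l) \<le> sum t N1 + sum u N2"
    if ne: "N1 \<noteq> {}" "N2 \<noteq> {}"
  proof -
    have "Min (t ` N1) \<in> t ` N1" "Min (u ` N2) \<in> u ` N2" using fin ne by simp_all
    then obtain k l where k: "k \<in> N1" "t k = Min (t ` N1)" and l: "l \<in> N2" "u l = Min (u ` N2)"
      by (metis imageE)
    have "d * t k \<le> real (card N1) * t k" using d t[OF k(1)] by (intro mult_right_mono) auto
    also have "\<dots> \<le> sum t N1" using k fin sum_mono[of N1 "\<lambda>_. t k" t] by simp
    finally have "d * t k \<le> sum t N1" .
    moreover have "d * u l \<le> real (card N2) * u l" using d u[OF l(1)] by (intro mult_right_mono) auto
    moreover have "\<dots> \<le> sum u N2" using l fin sum_mono[of N2 "\<lambda>_. u l" u] by simp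
    ultimately show ?thesis using k l by (intro bexI[of _ k] bexI[of _ l]) (auto simp: distrib_left)
  qed
  show "d * P \<le> sum t N1 + sum u N2"
  proof (cases "N1 = {} \<or> N2 = {}")
    case True
    then have "d = 0" using d by auto
    then show ?thesis using t u by (simp add: sum_nonneg add_nonneg_nonneg)
  next
    case False
    then obtain k l where "k \<in> N1" "l \<in> N2" "d * (t k + u l) \<le> sum t N1 + sum u N2"
      using min_pair by blast
    moreover have "d * P \<le> d * (t k + u l)" using pair[OF calculation(1,2)] d by (intro mult_left_mono) auto
    ultimately show ?thesis by linarith
  qed
  assume "0 < d" and strict: "\<And>k l. k \<in> N1 \<Longrightarrow> l \<in> N2 \<Longrightarrow> P < t k + u l"
  then have "N1 \<noteq> {}" "N2 \<noteq> {}" using d by auto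
  then obtain k l where "k \<in> N1" "l \<in> N2" "d * (t k + u l) \<le> sum t N1 + sum u N2"
    using min_pair by blast
  moreover have "d * P < d * (t k + u l)" using strict[OF calculation(1,2)] \<open>0 < d\<close> by simp
  ultimately show "d * P < sum t N1 + sum u N2" by linarith
qed

lemma boundary_neighbours_sin_sum_ge:
  fixes x :: "real^'n::finite"
  assumes D: "0 < D" "D \<le> pi/2" and AB: "x $ A - x $ B = D"
    and \<xi>: "0 \<le> \<xi>" "\<xi> < D/2" and energy: "(norm x)\<^sup>2 \<le> D\<^sup>2/2 + \<xi>\<^sup>2"
    and k: "k \<noteq> A" "k \<noteq> B" and l: "l \<noteq> A" "l \<noteq> B"
  shows "2 * sin (D/2 - \<xi>) \<le> sin (x $ A - x $ k) + sin (x $ l - x $ B)"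
    and "0 < \<xi> \<Longrightarrow> 2 * sin (D/2 - \<xi>) < sin (x $ A - x $ k) + sin (x $ l - x $ B)"
proof -
  define s where "s = (x $ A + x $ B) / 2"
  define p where "p = x $ k - s"
  define q where "q = s - x $ l"
  have AB_ne: "A \<noteq> B" using AB D by auto
  have shift: "x $ A - x $ k = D/2 - p" "x $ l - x $ B = D/2 - q"
    using AB unfolding p_def q_def s_def by (simp_all add: field_simps)
  have AB_square: "(x $ A)\<^sup>2 + (x $ B)\<^sup>2 = D\<^sup>2/2 + 2 * s\<^sup>2"
    using AB unfolding s_def by (simp add: power2_eq_square field_simps)
  have "pi < 16/5" using pi_approx by simp
  then have \<xi>_small: "\<xi> < 4/5" using \<xi> D by linarith
  have "sin p + sin q \<le> 2 * sin \<xi> \<and> 2 * cos \<xi> - (cos p + cos q) \<le> 2 * sin \<xi> - (sin p + sin q)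
    \<and> (0 < \<xi> \<longrightarrow> 2 * cos \<xi> - (cos p + cos q) < 2 * sin \<xi> - (sin p + sin q))"
  proof (cases "k = l")
    case True
    have "(\<Sum>i\<in>{A, B, k}. (x $ i)\<^sup>2) \<le> (norm x)\<^sup>2" by (rule sum_square_le_norm_square)
    then have "2 * s\<^sup>2 + (x $ k)\<^sup>2 \<le> \<xi>\<^sup>2" using k AB_ne AB_square energy by simp
    then have "p\<^sup>2 \<le> 3/2 * \<xi>\<^sup>2"
      unfolding p_def using zero_le_power2[of "x $ k + 2 * s"] by (simp add: power2_eq_square algebra_simps)
    moreover have "q = - p" using True unfolding p_def q_def by simp
    moreover have "0 \<le> sin \<xi>" using \<xi> \<xi>_small pi_gt3 by (intro sin_ge_zero) auto
    ultimately show ?thesis using opposite_pair_gap[OF \<xi>(1) \<xi>_small] by simp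
  next
    case False
    have "(\<Sum>i\<in>{A, B, k, l}. (x $ i)\<^sup>2) \<le> (norm x)\<^sup>2" by (rule sum_square_le_norm_square)
    then have sq: "2 * s\<^sup>2 + (x $ k)\<^sup>2 + (x $ l)\<^sup>2 \<le> \<xi>\<^sup>2"
      using k l False AB_ne AB_square energy by simp
    then have "p\<^sup>2 + q\<^sup>2 \<le> 2 * \<xi>\<^sup>2" "\<bar>p + q\<bar> \<le> 3/2 * \<xi>" "\<bar>p - q\<bar> \<le> 2 * \<xi>"
      unfolding p_def q_def using shift_pair_bounds[OF _ \<xi>(1)] by simp_all
    then show ?thesis using pair_gap[OF \<xi>(1) \<xi>_small] by blast
  qed
  then show "2 * sin (D/2 - \<xi>) \<le> sin (x $ A - x $ k) + sin (x $ l - x $ B)"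
    and "0 < \<xi> \<Longrightarrow> 2 * sin (D/2 - \<xi>) < sin (x $ A - x $ k) + sin (x $ l - x $ B)"
    using sin_half_diff_pair_ge[OF D] unfolding shift by blast+
qed

lemma boundary_min_energy_config:
  fixes x :: "real^'n::finite"
  assumes AB: "x $ A - x $ B = D" "0 < D" and energy: "(norm x)\<^sup>2 \<le> D\<^sup>2/2"
    and k: "k \<noteq> A" "k \<noteq> B"
  shows "x $ A - x $ k = D/2" and "x $ k - x $ B = D/2"
proof -
  define s where "s = (x $ A + x $ B) / 2"
  have "(x $ A)\<^sup>2 + (x $ B)\<^sup>2 = D\<^sup>2/2 + 2 * s\<^sup>2"
    using AB unfolding s_def by (simp add: power2_eq_square field_simps)
  moreover have "A \<noteq> B" using AB by auto
  then have "(\<Sum>i\<in>{A, B, k}. (x $ i)\<^sup>2) = (x $ A)\<^sup>2 + (x $ B)\<^sup>2 + (x $ k)\<^sup>2" using k by simp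
  moreover have "(\<Sum>i\<in>{A, B, k}. (x $ i)\<^sup>2) \<le> (norm x)\<^sup>2" by (rule sum_square_le_norm_square)
  ultimately have "2 * s\<^sup>2 + (x $ k)\<^sup>2 \<le> 0" using energy by linarith
  then have "s\<^sup>2 = 0" "(x $ k)\<^sup>2 = 0"
    using zero_le_power2[of s] zero_le_power2[of "x $ k"] by argo+
  then have "s = 0" "x $ k = 0" by simp_all
  then show "x $ A - x $ k = D/2" "x $ k - x $ B = D/2" using AB unfolding s_def by (simp_all add: field_simps)
qed

lemma nonadjacent_freq_diff_lt:
  fixes E :: "'n::finite \<Rightarrow> 'n \<Rightarrow> bool" and w :: "real^'n"
  assumes E_sym: "\<And>a b. E a b \<longleftrightarrow> E b a" and irr: "\<And>a. \<not> E a a" and conn: "\<And>k l. E\<^sup>*\<^sup>* k l"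
    and AB: "A \<noteq> B" "\<not> E A B" and D: "0 < D" "D \<le> pi/2" and K: "0 < K"
    and w: "sqrt 2 * norm w \<le> K * L_const E * sin D"
  shows "real CARD('n) * \<bar>w $ A - w $ B\<bar>
    < K * real (card (neighbours E A) + card (neighbours E B)) * sin (D/2)"
proof -
  have sin_half: "0 < sin (D/2)" using D pi_gt3 by (intro sin_gt_zero) auto
  have "cos (D/2) < cos 0" using D pi_gt3 by (intro cos_monotone_0_pi) auto
  then have "sin D < 2 * sin (D/2)" using sin_double[of "D/2"] sin_half by simp
  then have "K * L_const E * sin D < K * L_const E * (2 * sin (D/2))"
    using K L_const_pos[of E] by simp
  moreover have "\<bar>w $ A - w $ B\<bar> \<le> sqrt 2 * norm w" by (rule abs_diff_nth_le_sqrt2_mult_norm[OF AB(1)])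
  ultimately have "real CARD('n) * \<bar>w $ A - w $ B\<bar> < real CARD('n) * (K * L_const E * (2 * sin (D/2)))"
    using w by simp
  also have "\<dots> = (2 * real CARD('n) * L_const E) * (K * sin (D/2))" by simp
  also have "\<dots> \<le> real (card (neighbours E A) + card (neighbours E B)) * (K * sin (D/2))"
    using card_mult_L_const_le_degrees[OF E_sym irr conn AB] K sin_half by (intro mult_right_mono) auto
  finally show ?thesis by (simp add: algebra_simps)
qed

lemma boundary_sin_sum_gt:
  fixes E :: "'n::finite \<Rightarrow> 'n \<Rightarrow> bool" and x :: "real^'n"
  assumes E_sym: "\<And>a b. E a b \<longleftrightarrow> E b a" and irr: "\<And>a. \<not> E a a"
    and D: "0 < D" "D \<le> pi/2" and AB: "x $ A - x $ B = D"
    and lo: "\<And>i. x $ B \<le> x $ i" and hi: "\<And>i. x $ i \<le> x $ A"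
    and \<xi>: "0 \<le> \<xi>" "\<xi> < D/2" and energy: "(norm x)\<^sup>2 \<le> D\<^sup>2/2 + \<xi>\<^sup>2"
    and deg: "1 \<le> \<delta>" "\<And>i. \<delta> \<le> card (neighbours E i)"
  shows "2 * real \<delta> * sin (D/2 - \<xi>)
      < (\<Sum>k\<in>neighbours E A. sin (x $ A - x $ k)) + (\<Sum>l\<in>neighbours E B. sin (x $ l - x $ B))
    \<or> \<xi> = 0 \<and> \<not> E A B"
proof -
  define t where "t k = sin (x $ A - x $ k)" for k
  define u where "u l = sin (x $ l - x $ B)" for l
  define N1 where "N1 = neighbours E A - {B}"
  define N2 where "N2 = neighbours E B - {A}"
  define \<theta> where "\<theta> = D/2 - \<xi>"
  have t: "0 \<le> t k" for k
    unfolding t_def using hi[of k] lo[of k] AB D pi_gt_zero by (intro sin_ge_zero) auto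
  have u: "0 \<le> u l" for l
    unfolding u_def using hi[of l] lo[of l] AB D pi_gt_zero by (intro sin_ge_zero) auto
  have pair: "2 * sin \<theta> \<le> t k + u l" "0 < \<xi> \<Longrightarrow> 2 * sin \<theta> < t k + u l"
    if "k \<in> N1" "l \<in> N2" for k l
    using boundary_neighbours_sin_sum_ge[OF D AB \<xi> energy, of k l] that irr
    unfolding N1_def N2_def neighbours_def t_def u_def \<theta>_def by auto
  have sin_\<theta>: "0 < sin \<theta>" "sin \<theta> < sin D"
    unfolding \<theta>_def using D \<xi> pi_gt3 by (auto intro!: sin_gt_zero simp: sin_mono_less_eq)
  show ?thesis
  proof (cases "E A B")
    case True
    then have "B \<in> neighbours E A" "A \<in> neighbours E B" using E_sym by (auto simp: neighbours_def)
    then have sums: "sum t (neighbours E A) + sum u (neighbours E B) = 2 * sin D + (sum t N1 + sum u N2)"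
      and "card N1 = card (neighbours E A) - 1" "card N2 = card (neighbours E B) - 1"
      unfolding N1_def N2_def t_def u_def using AB by (simp_all add: sum.remove)
    then have "real \<delta> - 1 \<le> real (card N1)" "real \<delta> - 1 \<le> real (card N2)"
      using deg(1) deg(2)[of A] deg(2)[of B] by (auto simp: of_nat_diff)
    then have "(real \<delta> - 1) * (2 * sin \<theta>) \<le> sum t N1 + sum u N2"
      using deg(1) t u pair(1) by (intro sum_add_sum_ge_pair_bound(1)) (auto simp: N1_def N2_def)
    then have "2 * real \<delta> * sin \<theta> < sum t (neighbours E A) + sum u (neighbours E B)"
      using sums sin_\<theta> by (simp add: algebra_simps)
    then show ?thesis unfolding t_def u_def \<theta>_def by blast
  next
    case False
    then have N: "N1 = neighbours E A" "N2 = neighbours E B" using E_sym by (auto simp: N1_def N2_def neighbours_def)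
    show ?thesis
    proof (cases "\<xi> = 0")
      case nonzero: False
      have "real \<delta> * (2 * sin \<theta>) < sum t N1 + sum u N2"
        using deg t u pair \<xi> nonzero
        by (intro sum_add_sum_ge_pair_bound(2)) (auto simp: N)
      then show ?thesis unfolding t_def u_def \<theta>_def N by (simp add: algebra_simps)
    qed (use False in simp)
  qed
qed

text \<open>In the borderline case \<open>\<E>\<^sub>0 = D\<^sup>2/2\<close> the condition on \<open>\<bar>w\<^sub>i - w\<^sub>j\<bar>\<close> only gives a
  non-strict inequality. The configuration is then rigid, and the strict margin comes from
  condition \<open>(*)\<close> instead.\<close>
lemma min_energy_boundary_freq_gap_lt:
  fixes E :: "'n::finite \<Rightarrow> 'n \<Rightarrow> bool" and x w :: "real^'n"
  assumes E_sym: "\<And>a b. E a b \<longleftrightarrow> E b a" and irr: "\<And>a. \<not> E a a" and conn: "\<And>k l. E\<^sup>*\<^sup>* k l"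
    and D: "0 < D" "D \<le> pi/2" and AB: "x $ A - x $ B = D" and energy: "(norm x)\<^sup>2 \<le> D\<^sup>2/2"
    and non_adj: "\<not> E A B" and K: "0 < K"
    and K_spread: "norm w * D / (sqrt (D\<^sup>2/2) * L_const E * sin D) \<le> K"
  shows "real CARD('n) * \<bar>w $ A - w $ B\<bar>
    < K * ((\<Sum>k\<in>neighbours E A. sin (x $ A - x $ k)) + (\<Sum>l\<in>neighbours E B. sin (x $ l - x $ B)))"
proof -
  have A_side: "x $ A - x $ k = D/2" if "k \<in> neighbours E A" for k
    using boundary_min_energy_config(1)[OF AB D(1) energy, of k] that irr non_adj by (auto simp: neighbours_def)
  have B_side: "x $ l - x $ B = D/2" if "l \<in> neighbours E B" for l
    using boundary_min_energy_config(2)[OF AB D(1) energy, of l] that irr non_adj E_sym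
    by (auto simp: neighbours_def)
  have "(\<Sum>k\<in>neighbours E A. sin (x $ A - x $ k)) = (\<Sum>k\<in>neighbours E A. sin (D/2))"
    "(\<Sum>l\<in>neighbours E B. sin (x $ l - x $ B)) = (\<Sum>l\<in>neighbours E B. sin (D/2))"
    by (intro sum.cong refl; simp add: A_side B_side)+
  moreover have "sqrt 2 * norm w \<le> K * L_const E * sin D"
  proof -
    have "sqrt 2 * sqrt (D\<^sup>2/2) = D" unfolding real_sqrt_mult[symmetric] using D by simp
    moreover have "0 < sqrt (D\<^sup>2/2) * L_const E * sin D"
      using D L_const_pos[of E] sin_gt_zero[of D] pi_gt3 by simp
    then have "norm w * D \<le> K * (sqrt (D\<^sup>2/2) * L_const E * sin D)"
      using K_spread by (simp add: pos_divide_le_eq)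
    then have "sqrt 2 * (norm w * D) \<le> sqrt 2 * (K * (sqrt (D\<^sup>2/2) * L_const E * sin D))"
      by (rule mult_left_mono) simp
    ultimately have "sqrt 2 * norm w * D \<le> K * L_const E * sin D * D" by (simp add: algebra_simps)
    then show ?thesis using D by simp
  qed
  moreover have "A \<noteq> B" using AB D by auto
  ultimately show ?thesis
    using nonadjacent_freq_diff_lt[OF E_sym irr conn _ non_adj D K, of w] by (simp add: algebra_simps)
qed

lemma kuramoto_rhs_boundary_diff_neg:
  fixes E :: "'n::finite \<Rightarrow> 'n \<Rightarrow> bool" and x w :: "real^'n"
  assumes E_sym: "\<And>a b. E a b \<longleftrightarrow> E b a" and irr: "\<And>a. \<not> E a a" and conn: "\<And>k l. E\<^sup>*\<^sup>* k l"
    and D: "0 < D" "D \<le> pi/2"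
    and AB: "x $ A - x $ B = D" and lo: "\<And>i. x $ B \<le> x $ i" and hi: "\<And>i. x $ i \<le> x $ A"
    and energy: "(norm x)\<^sup>2 \<le> E0" and E0: "D\<^sup>2/2 \<le> E0" "E0 < 3/4 * D\<^sup>2" and K: "0 < K"
    and K_freq: "real CARD('n) * \<bar>w $ A - w $ B\<bar>
      / (2 * real (min_degree E) * sin (D/2 - sqrt (E0 - D\<^sup>2/2))) \<le> K"
    and K_spread: "norm w * D / (sqrt E0 * L_const E * sin D) \<le> K"
  shows "kuramoto_rhs E K w x $ A - kuramoto_rhs E K w x $ B < 0"
proof -
  define \<xi> where "\<xi> = sqrt (E0 - D\<^sup>2/2)"
  define S where "S = (\<Sum>k\<in>neighbours E A. sin (x $ A - x $ k)) + (\<Sum>l\<in>neighbours E B. sin (x $ l - x $ B))"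
  have AB_ne: "A \<noteq> B" using AB D by auto
  have \<delta>: "1 \<le> min_degree E" using min_degree_pos[OF conn AB_ne] by simp
  have \<xi>_sq: "\<xi>\<^sup>2 = E0 - D\<^sup>2/2" unfolding \<xi>_def using E0 by simp
  have "\<xi> < sqrt ((D/2)\<^sup>2)" unfolding \<xi>_def using E0 by (intro real_sqrt_less_mono) (simp add: power_divide)
  then have \<xi>: "0 \<le> \<xi>" "\<xi> < D/2" unfolding \<xi>_def using D E0 by simp_all
  have "0 < sin (D/2 - \<xi>)" using \<xi> D pi_gt3 by (intro sin_gt_zero) auto
  then have freq: "real CARD('n) * \<bar>w $ A - w $ B\<bar> \<le> K * (2 * real (min_degree E) * sin (D/2 - \<xi>))"
    using K_freq \<delta> unfolding \<xi>_def[symmetric] by (simp add: pos_divide_le_eq mult.commute)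
  have "real CARD('n) * \<bar>w $ A - w $ B\<bar> < K * S"
  proof -
    have "(norm x)\<^sup>2 \<le> D\<^sup>2/2 + \<xi>\<^sup>2" using energy \<xi>_sq by simp
    from boundary_sin_sum_gt[OF E_sym irr D AB lo hi \<xi> this \<delta> min_degree_le]
    show ?thesis unfolding S_def[symmetric]
  proof (elim disjE conjE)
    assume "2 * real (min_degree E) * sin (D/2 - \<xi>) < S"
    then have "K * (2 * real (min_degree E) * sin (D/2 - \<xi>)) < K * S" using K by simp
    then show ?thesis using freq by linarith
  next
    assume "\<xi> = 0" "\<not> E A B"
    then have E0_eq: "E0 = D\<^sup>2/2" using \<xi>_sq by simp
    show ?thesis unfolding S_def
      by (rule min_energy_boundary_freq_gap_lt[OF E_sym irr conn D AB energy[unfolded E0_eq] \<open>\<not> E A B\<close> K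
            K_spread[unfolded E0_eq]])
  qed
  qed
  moreover have "real CARD('n) * (w $ A - w $ B) \<le> real CARD('n) * \<bar>w $ A - w $ B\<bar>"
    by (intro mult_left_mono) auto
  ultimately have "real CARD('n) * (w $ A - w $ B) < K * S" by linarith
  then have "w $ A - w $ B < K / real CARD('n) * S" by (simp add: field_simps)
  then show ?thesis unfolding kuramoto_rhs_nth_diff S_def by simp
qed

section \<open>Solutions and their potential\<close>

lemma phase_spread_le_iff: "phase_spread x \<le> D \<longleftrightarrow> (\<forall>i j. x $ i - x $ j \<le> D)"
  for x :: "real^'n::finite"
proof -
  obtain a b where a: "(MAX i. x $ i) = x $ a" and b: "(MIN i. x $ i) = x $ b"
    using Max_in[of "range (\<lambda>i. x $ i)"] Min_in[of "range (\<lambda>i. x $ i)"] by fastforce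
  have "x $ i \<le> x $ a" "x $ b \<le> x $ i" for i
    using Max_ge[of "range (\<lambda>i. x $ i)" "x $ i"] Min_le[of "range (\<lambda>i. x $ i)" "x $ i"] a b by auto
  then show ?thesis unfolding phase_spread_def a b by (meson diff_mono order_trans order_refl)
qed

lemma phase_spread_pos_imp_ex: "0 < phase_spread x \<Longrightarrow> \<exists>i j. x $ i \<noteq> x $ j"
  for x :: "real^'n::finite"
proof (rule ccontr)
  assume "0 < phase_spread x" "\<not> (\<exists>i j. x $ i \<noteq> x $ j)"
  then have "\<forall>i j. x $ i - x $ j \<le> 0" by (metis diff_self order_refl)
  then have "phase_spread x \<le> 0" using phase_spread_le_iff[of x 0] by blast
  with \<open>0 < phase_spread x\<close> show False by simp
qed

lemma norm_vec_eq_sqrt_sum: "norm x = sqrt (\<Sum>i\<in>UNIV. (x $ i)\<^sup>2)" for x :: "real^'n::finite"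
  using norm_square_vec[of x] by (metis norm_ge_zero real_sqrt_unique)

lemma continuous_on_kuramoto_rhs: "continuous_on UNIV (kuramoto_rhs E K w)"
  unfolding kuramoto_rhs_def by (intro continuous_intros)

lemma abs_kuramoto_rhs_nth_le: "K \<ge> 0 \<Longrightarrow> \<bar>kuramoto_rhs E K w x $ i\<bar> \<le> norm w + K"
  for E :: "'n::finite \<Rightarrow> 'n \<Rightarrow> bool"
proof -
  assume K: "K \<ge> 0"
  have "\<bar>\<Sum>k\<in>neighbours E i. sin (x $ k - x $ i)\<bar> \<le> (\<Sum>k\<in>neighbours E i. \<bar>sin (x $ k - x $ i)\<bar>)"
    by (rule sum_abs)
  also have "\<dots> \<le> (\<Sum>k\<in>neighbours E i. 1)" by (intro sum_mono) simp
  also have "\<dots> = real (card (neighbours E i))" by simp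
  also have "\<dots> \<le> real CARD('n)" by (simp add: card_mono)
  finally have "\<bar>K / real CARD('n) * (\<Sum>k\<in>neighbours E i. sin (x $ k - x $ i))\<bar> \<le> K"
    using K by (simp add: abs_mult field_simps mult_left_mono)
  moreover have "\<bar>w $ i\<bar> \<le> norm w" by (rule component_le_norm_cart)
  ultimately show ?thesis
    using abs_triangle_ineq[of "w $ i" "K / real CARD('n) * (\<Sum>k\<in>neighbours E i. sin (x $ k - x $ i))"]
    unfolding kuramoto_rhs_def by simp
qed

definition edges :: "('n \<Rightarrow> 'n \<Rightarrow> bool) \<Rightarrow> ('n \<times> 'n) set" where
  "edges E = {p. E (fst p) (snd p)}"

text \<open>The Kuramoto vector field is minus the gradient of this potential.\<close>
definition kuramoto_potential :: "('n::finite \<Rightarrow> 'n \<Rightarrow> bool) \<Rightarrow> real \<Rightarrow> real^'n \<Rightarrow> real^'n \<Rightarrow> real"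
  where "kuramoto_potential E K w x = - (\<Sum>i\<in>UNIV. w $ i * x $ i)
     - K / (2 * real CARD('n)) * (\<Sum>p\<in>edges E. cos (x $ snd p - x $ fst p))"

lemma continuous_on_kuramoto_potential: "continuous_on UNIV (kuramoto_potential E K w)"
  unfolding kuramoto_potential_def by (intro continuous_intros)

lemma kuramoto_potential_directional_derivative:
  fixes E :: "'n::finite \<Rightarrow> 'n \<Rightarrow> bool"
  assumes E_sym: "\<And>a b. E a b \<longleftrightarrow> E b a"
  shows "- (\<Sum>i\<in>UNIV. w $ i * y $ i)
     + K / (2 * real CARD('n)) * (\<Sum>p\<in>edges E. sin (x $ snd p - x $ fst p) * (y $ snd p - y $ fst p))
     = - (\<Sum>i\<in>UNIV. y $ i * kuramoto_rhs E K w x $ i)"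
proof -
  have "(\<Sum>p\<in>edges E. sin (x $ snd p - x $ fst p) * (y $ snd p - y $ fst p))
      = (\<Sum>i\<in>UNIV. \<Sum>k\<in>UNIV. if E i k then (y $ k - y $ i) * sin (x $ k - x $ i) else 0)"
    unfolding edges_def using sum_sum_if_eq_sum_pairs[of E "\<lambda>i k. (y $ k - y $ i) * sin (x $ k - x $ i)"]
    by (simp add: mult.commute)
  then show ?thesis using sum_mult_kuramoto_rhs[where E = E and y = y and x = x and K = K and w = w, OF E_sym]
    by (simp add: mult.commute)
qed

locale kuramoto_solution =
  fixes E :: "'n::finite \<Rightarrow> 'n \<Rightarrow> bool" and K :: real and w :: "real^'n" and \<phi> :: "real \<Rightarrow> real^'n"
  assumes graph: "undirected_graph E" and connected: "graph_connected E" and K_pos: "K > 0"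
    and sum_w: "(\<Sum>i\<in>UNIV. w $ i) = 0"
    and ode: "\<forall>t\<ge>0. (\<phi> has_vector_derivative kuramoto_rhs E K w (\<phi> t)) (at t within {0..})"
begin

abbreviation "rhs x \<equiv> kuramoto_rhs E K w x"

lemma adjacent_sym: "E a b \<longleftrightarrow> E b a" using graph unfolding undirected_graph_def by blast

lemma not_adjacent_self: "\<not> E a a" using graph unfolding undirected_graph_def by blast

lemma reachable: "E\<^sup>*\<^sup>* k l" using connected unfolding graph_connected_def by blast

lemma has_real_derivative_phase:
  "t \<ge> 0 \<Longrightarrow> ((\<lambda>t. \<phi> t $ i) has_real_derivative rhs (\<phi> t) $ i) (at t within {0..})"
  using bounded_linear.has_vector_derivative[OF bounded_linear_vec_nth[of i], of \<phi>] ode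
  by (simp add: has_real_derivative_iff_has_vector_derivative)

lemma has_real_derivative_phase_at: "t > 0 \<Longrightarrow> ((\<lambda>t. \<phi> t $ i) has_real_derivative rhs (\<phi> t) $ i) (at t)"
  using has_real_derivative_phase[of t i] at_within_interior[of t "{0..}"] by simp

lemma continuous_on_phases: "continuous_on {0..} \<phi>"
  using ode by (intro continuous_on_vector_derivative) auto

lemma continuous_on_phase: "continuous_on {0..} (\<lambda>t. \<phi> t $ i)"
  using continuous_on_phases by (intro continuous_intros)

lemma continuous_on_norm_square: "continuous_on {0..} (\<lambda>t. (norm (\<phi> t))\<^sup>2)"
  using continuous_on_phases by (intro continuous_intros)

lemma sum_phases_const: "t \<ge> 0 \<Longrightarrow> (\<Sum>i\<in>UNIV. \<phi> t $ i) = (\<Sum>i\<in>UNIV. \<phi> 0 $ i)"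
proof -
  have "\<exists>c. \<forall>t\<in>{0..}. (\<Sum>i\<in>UNIV. \<phi> t $ i) = c"
  proof (rule has_derivative_zero_constant[OF convex_real_interval(1)])
    fix t :: real assume "t \<in> {0..}"
    then have "((\<lambda>t. \<Sum>i\<in>UNIV. \<phi> t $ i) has_real_derivative (\<Sum>i\<in>UNIV. rhs (\<phi> t) $ i)) (at t within {0..})"
      by (intro DERIV_sum has_real_derivative_phase) auto
    moreover have "(\<Sum>i\<in>UNIV. rhs (\<phi> t) $ i) = 0"
      using sum_kuramoto_rhs[where E = E, OF adjacent_sym] sum_w by simp
    moreover have "(\<lambda>h::real. 0 * h) = (\<lambda>h. 0)" by auto
    ultimately show "((\<lambda>t. \<Sum>i\<in>UNIV. \<phi> t $ i) has_derivative (\<lambda>h. 0)) (at t within {0..})"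
      unfolding has_field_derivative_def by simp
  qed
  then show "t \<ge> 0 \<Longrightarrow> ?thesis" by force
qed

lemma has_real_derivative_norm_square:
  "t > 0 \<Longrightarrow> ((\<lambda>t. (norm (\<phi> t))\<^sup>2) has_real_derivative 2 * (\<Sum>i\<in>UNIV. \<phi> t $ i * rhs (\<phi> t) $ i)) (at t)"
proof -
  assume t: "t > 0"
  have "((\<lambda>t. \<Sum>i\<in>UNIV. (\<phi> t $ i)\<^sup>2) has_real_derivative (\<Sum>i\<in>UNIV. 2 * (\<phi> t $ i) * rhs (\<phi> t) $ i)) (at t)"
    by (intro DERIV_sum) (auto intro!: derivative_eq_intros has_real_derivative_phase_at[OF t])
  then show ?thesis unfolding norm_square_vec by (simp add: sum_distrib_left algebra_simps)
qed

lemma phase_lipschitz: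
  assumes "0 \<le> s" "s \<le> t"
  shows "\<bar>\<phi> t $ i - \<phi> s $ i\<bar> \<le> (norm w + K) * (t - s)"
proof -
  have cont: "continuous_on {s..t} (\<lambda>u. \<phi> u $ i)"
    by (rule continuous_on_subset[OF continuous_on_phase]) (use assms in auto)
  have "(\<lambda>u. c * \<phi> u $ i - (norm w + K) * u) t \<le> (\<lambda>u. c * \<phi> u $ i - (norm w + K) * u) s"
    if c: "\<bar>c\<bar> = 1" for c
  proof (rule DERIV_nonpos_imp_decreasing_open[where f = "\<lambda>u. c * \<phi> u $ i - (norm w + K) * u", OF assms(2)])
    fix u assume u: "s < u" "u < t"
    have "((\<lambda>u. c * \<phi> u $ i - (norm w + K) * u) has_real_derivative c * rhs (\<phi> u) $ i - (norm w + K)) (at u)"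
      using has_real_derivative_phase_at[of u i] u assms by (auto intro!: derivative_eq_intros)
    moreover have "c * rhs (\<phi> u) $ i \<le> \<bar>c * rhs (\<phi> u) $ i\<bar>" by (rule abs_ge_self)
    then have "c * rhs (\<phi> u) $ i \<le> norm w + K"
      using abs_kuramoto_rhs_nth_le[of K E w "\<phi> u" i] K_pos c by (simp add: abs_mult)
    ultimately show "\<exists>y. ((\<lambda>u. c * \<phi> u $ i - (norm w + K) * u) has_real_derivative y) (at u) \<and> y \<le> 0"
      by force
  qed (use continuous_on_subset[OF continuous_on_phases, of "{s..t}"] assms in \<open>auto intro!: continuous_intros\<close>)
  from this[of 1] this[of "-1"] show ?thesis by (simp add: abs_le_iff algebra_simps)
qed

lemma phases_lipschitz:
  "0 \<le> s \<Longrightarrow> s \<le> t \<Longrightarrow> dist (\<phi> t) (\<phi> s) \<le> real CARD('n) * (norm w + K) * (t - s)"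
proof -
  assume st: "0 \<le> s" "s \<le> t"
  have "dist (\<phi> t) (\<phi> s) \<le> (\<Sum>i\<in>UNIV. \<bar>(\<phi> t - \<phi> s) $ i\<bar>)" unfolding dist_norm by (rule norm_le_l1_cart)
  also have "\<dots> \<le> real CARD('n) * ((norm w + K) * (t - s))"
    using sum_bounded_above[of UNIV "\<lambda>i. \<bar>(\<phi> t - \<phi> s) $ i\<bar>"] phase_lipschitz[OF st] by simp
  finally show ?thesis by simp
qed

definition V :: "real \<Rightarrow> real" where "V t = kuramoto_potential E K w (\<phi> t)"

lemma has_real_derivative_V: "t > 0 \<Longrightarrow> (V has_real_derivative - (norm (rhs (\<phi> t)))\<^sup>2) (at t)"
proof -
  assume t: "t > 0"
  note d = has_real_derivative_phase_at[OF t]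
  have "(V has_real_derivative
      - (\<Sum>i\<in>UNIV. w $ i * rhs (\<phi> t) $ i)
      - K / (2 * real CARD('n)) * (\<Sum>p\<in>edges E. - sin (\<phi> t $ snd p - \<phi> t $ fst p)
          * (rhs (\<phi> t) $ snd p - rhs (\<phi> t) $ fst p))) (at t)"
    unfolding V_def kuramoto_potential_def
    by (intro DERIV_diff DERIV_minus DERIV_cmult DERIV_sum d DERIV_chain2[OF DERIV_cos DERIV_diff[OF d d]])
  moreover have "(norm (rhs (\<phi> t)))\<^sup>2 = (\<Sum>i\<in>UNIV. rhs (\<phi> t) $ i * rhs (\<phi> t) $ i)"
    unfolding norm_square_vec by (simp add: power2_eq_square)
  ultimately show ?thesis
    using kuramoto_potential_directional_derivative[where E = E and w = w and y = "rhs (\<phi> t)" and K = K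
        and x = "\<phi> t", OF adjacent_sym]
    by (simp add: sum_negf)
qed

lemma continuous_on_V: "continuous_on {0..} V"
  unfolding V_def by (rule continuous_on_compose2[OF continuous_on_kuramoto_potential continuous_on_phases]) auto

lemma V_decrease:
  assumes t: "0 \<le> t" and h: "0 \<le> h"
    and speed: "\<And>s. t < s \<Longrightarrow> s < t + h \<Longrightarrow> \<mu> \<le> (norm (rhs (\<phi> s)))\<^sup>2"
  shows "V (t + h) \<le> V t - \<mu> * h"
proof -
  have "(\<lambda>s. V s + \<mu> * s) (t + h) \<le> (\<lambda>s. V s + \<mu> * s) t"
  proof (rule DERIV_nonpos_imp_decreasing_open[where f = "\<lambda>s. V s + \<mu> * s"])
    fix s assume s: "t < s" "s < t + h"
    have "((\<lambda>s. V s + \<mu> * s) has_real_derivative - (norm (rhs (\<phi> s)))\<^sup>2 + \<mu>) (at s)"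
      using has_real_derivative_V[of s] s t by (auto intro!: derivative_eq_intros)
    then show "\<exists>y. ((\<lambda>s. V s + \<mu> * s) has_real_derivative y) (at s) \<and> y \<le> 0"
      using speed[OF s] by force
  qed (use continuous_on_subset[OF continuous_on_V, of "{t..t + h}"] t h in \<open>auto intro!: continuous_intros\<close>)
  then show ?thesis by (simp add: algebra_simps)
qed

lemma V_antimono: "0 \<le> a \<Longrightarrow> a \<le> b \<Longrightarrow> V b \<le> V a"
  using V_decrease[of a "b - a" 0] by simp

end

section \<open>Invariance of the spread bound and frequency synchronization\<close>

lemma stays_below_if_DERIV_nonpos_above:
  fixes f f' :: "real \<Rightarrow> real"
  assumes cont: "continuous_on {a..b} f"
    and der: "\<And>t. a < t \<Longrightarrow> t < b \<Longrightarrow> (f has_real_derivative f' t) (at t)"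
    and start: "f a \<le> c" and push: "\<And>t. a < t \<Longrightarrow> t < b \<Longrightarrow> c < f t \<Longrightarrow> f' t \<le> 0"
  shows "\<forall>t\<in>{a..b}. f t \<le> c"
proof (rule ccontr)
  assume "\<not> ?thesis"
  then obtain s where s: "a \<le> s" "s \<le> b" "c < f s" by auto
  \<comment> \<open>the last time before \<open>s\<close> at which \<open>f \<le> c\<close>\<close>
  define T where "T = {a..s} \<inter> f -` {..c}"
  have "closed T" unfolding T_def
    by (rule continuous_closed_preimage[OF continuous_on_subset[OF cont]]) (use s in auto)
  moreover have "a \<in> T" unfolding T_def using start s by auto
  moreover have bdd: "bdd_above T" unfolding T_def by (rule bdd_aboveI[of _ s]) auto
  ultimately have "Sup T \<in> T" using closed_contains_Sup by blast
  then have r: "a \<le> Sup T" "Sup T < s" "f (Sup T) \<le> c" using s unfolding T_def by (auto simp: le_less)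
  have above: "c < f t" if "Sup T < t" "t \<le> s" for t
    using cSup_upper[OF _ bdd, of t] that r unfolding T_def by force
  have "f s \<le> f (Sup T)"
  proof (rule DERIV_nonpos_imp_decreasing_open[where f = f and a = "Sup T" and b = s])
    fix t assume t: "Sup T < t" "t < s"
    then show "\<exists>y. (f has_real_derivative y) (at t) \<and> y \<le> 0"
      using der[of t] push[of t] above[of t] r s by force
  qed (use r s in \<open>auto intro: continuous_on_subset[OF cont]\<close>)
  then show False using r s by simp
qed

lemma le_at_left_limit:
  fixes g :: "real \<Rightarrow> real"
  assumes cont: "continuous_on {0..} g" and \<tau>: "0 < \<tau>"
    and le: "\<And>s. 0 \<le> s \<Longrightarrow> s < \<tau> \<Longrightarrow> g s \<le> c"
  shows "g \<tau> \<le> c"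
proof (rule tendsto_upperbound)
  show "(g \<longlongrightarrow> g \<tau>) (at \<tau> within {0..<\<tau>})"
    using cont \<tau> unfolding continuous_on_def
    by (meson atLeastLessThan_iff atLeast_iff less_eq_real_def tendsto_within_subset subsetI)
  show "eventually (\<lambda>s. g s \<le> c) (at \<tau> within {0..<\<tau>})"
    using le by (auto simp: eventually_at_filter)
  show "at \<tau> within {0..<\<tau>} \<noteq> bot"
    using \<tau> by (subst at_within_eq_bot_iff) (auto simp: closure_atLeastLessThan)
qed

locale kuramoto_spread_bound = kuramoto_solution E K w \<phi> for E :: "'n::finite \<Rightarrow> 'n \<Rightarrow> bool" and K w \<phi> +
  fixes D :: real
  assumes init_sum: "(\<Sum>i\<in>UNIV. \<phi> 0 $ i) = 0"
    and D0_pos: "0 < phase_spread (\<phi> 0)"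
    and D0_le: "phase_spread (\<phi> 0) \<le> D"
    and D_le: "D \<le> pi / 2"
    and K_spread: "K \<ge> sqrt (\<Sum>i\<in>UNIV. (w $ i)^2) * D
                    / (sqrt (\<Sum>i\<in>UNIV. (\<phi> 0 $ i)^2) * L_const E * sin D)"
    and K_freq: "((\<Sum>i\<in>UNIV. (\<phi> 0 $ i)^2) < 3/4 * D^2 \<and>
               (\<forall>i j. K \<ge> real CARD('n) * \<bar>w $ i - w $ j\<bar>
                  / (2 * real (min_degree E)
                     * sin (D/2 - sqrt ((\<Sum>i\<in>UNIV. (\<phi> 0 $ i)^2) - D^2/2)))))
             \<or> (\<Sum>i\<in>UNIV. (\<phi> 0 $ i)^2) < D^2/2"
begin

definition E0 :: real where "E0 = (norm (\<phi> 0))\<^sup>2"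

lemma E0_eq_sum: "(\<Sum>i\<in>UNIV. (\<phi> 0 $ i)^2) = E0" unfolding E0_def norm_square_vec ..

lemma D_pos: "0 < D" using D0_pos D0_le by linarith

lemma E0_pos: "0 < E0"
proof -
  obtain i j where "\<phi> 0 $ i \<noteq> \<phi> 0 $ j" using phase_spread_pos_imp_ex[OF D0_pos] by blast
  then have "0 < sqrt 2 * norm (\<phi> 0)" using abs_diff_nth_le_sqrt2_mult_norm[of i j "\<phi> 0"] by fastforce
  then have "0 < norm (\<phi> 0)" by (simp add: zero_less_mult_iff)
  then show ?thesis unfolding E0_def by simp
qed

lemma sin_D_pos: "0 < sin D" using D_pos D_le pi_gt3 by (intro sin_gt_zero) auto

lemma K_spread_norm: "norm w * D / (sqrt E0 * L_const E * sin D) \<le> K"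
  using K_spread unfolding E0_eq_sum norm_vec_eq_sqrt_sum[of w, symmetric] .

lemma sum_phases_eq_0: "t \<ge> 0 \<Longrightarrow> (\<Sum>i\<in>UNIV. \<phi> t $ i) = 0"
  using sum_phases_const init_sum by simp

lemma energy_derivative_nonpos:
  assumes t: "t > 0" and spread: "\<forall>i j. \<phi> t $ i - \<phi> t $ j \<le> D" and big: "E0 < (norm (\<phi> t))\<^sup>2"
  shows "2 * (\<Sum>i\<in>UNIV. \<phi> t $ i * rhs (\<phi> t) $ i) \<le> 0"
proof -
  let ?x = "\<phi> t"
  have "\<bar>?x $ k - ?x $ i\<bar> \<le> D" for i k using spread[rule_format, of k i] spread[rule_format, of i k] by simp
  then have energy: "(\<Sum>i\<in>UNIV. ?x $ i * rhs ?x $ i) \<le> norm ?x * norm w - K * L_const E * (sin D / D) * (norm ?x)\<^sup>2"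
    using sum_mult_kuramoto_rhs_le[where E = E and x = ?x and K = K and w = w, OF adjacent_sym reachable
        sum_phases_eq_0 D_pos D_le _ K_pos] t by simp
  have "norm w * D \<le> K * (sqrt E0 * L_const E * sin D)"
    using K_spread_norm E0_pos L_const_pos[of E] sin_D_pos by (simp add: pos_divide_le_eq mult.commute)
  also have "\<dots> \<le> K * (norm ?x * L_const E * sin D)"
  proof -
    have "sqrt E0 \<le> sqrt ((norm ?x)\<^sup>2)" using big by (intro real_sqrt_le_mono) simp
    then have "sqrt E0 \<le> norm ?x" by simp
    then show ?thesis using K_pos L_const_pos[of E] sin_D_pos by (intro mult_left_mono mult_right_mono) auto
  qed
  finally have "norm w \<le> K * L_const E * (sin D / D) * norm ?x" using D_pos by (simp add: field_simps)
  then have "norm ?x * norm w \<le> norm ?x * (K * L_const E * (sin D / D) * norm ?x)"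
    by (intro mult_left_mono) auto
  then show ?thesis using energy by (simp add: power2_eq_square algebra_simps)
qed

definition confined :: "real \<Rightarrow> bool" where
  "confined t \<longleftrightarrow> (\<forall>i j. \<phi> t $ i - \<phi> t $ j \<le> D) \<and> (norm (\<phi> t))\<^sup>2 \<le> E0"

lemma confined_0: "confined 0"
  unfolding confined_def E0_def using D0_le phase_spread_le_iff by blast

text \<open>At a confined time with \<open>\<phi>\<^sub>i - \<phi>\<^sub>j = D\<close> the nodes \<open>i, j\<close> carry the extreme phases,
  so the gap strictly decreases.\<close>
lemma eventually_phase_gap_le_at_right:
  assumes t: "t \<ge> 0" and conf: "confined t"
  shows "eventually (\<lambda>s. \<phi> s $ i - \<phi> s $ j \<le> D) (at_right t)"
proof -
  define p where "p s = \<phi> s $ i - \<phi> s $ j" for s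
  have "(p \<longlongrightarrow> p t) (at t within {0..})"
    using continuous_on_diff[OF continuous_on_phase continuous_on_phase] t
    unfolding p_def continuous_on_def by auto
  then have lim: "(p \<longlongrightarrow> p t) (at_right t)" by (rule tendsto_within_subset) (use t in auto)
  have p_le: "p t \<le> D" using conf unfolding confined_def p_def by auto
  show ?thesis
  proof (cases "p t < D")
    case True
    from order_tendstoD(2)[OF lim True] show ?thesis
      by (rule eventually_mono) (simp add: p_def)
  next
    case False
    then have gap: "\<phi> t $ i - \<phi> t $ j = D" using p_le unfolding p_def by simp
    then have "i \<noteq> j" using D_pos by auto
    then have "D \<le> sqrt 2 * norm (\<phi> t)" using abs_diff_nth_le_sqrt2_mult_norm[of i j "\<phi> t"] gap by simp
    then have "D\<^sup>2 \<le> (sqrt 2 * norm (\<phi> t))\<^sup>2" using D_pos by (intro power_mono) auto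
    then have E0_ge: "D\<^sup>2 / 2 \<le> E0" using conf unfolding confined_def by (simp add: power_mult_distrib)
    then have "E0 < 3/4 * D\<^sup>2" and
      K_freq_ij: "real CARD('n) * \<bar>w $ i - w $ j\<bar> / (2 * real (min_degree E) * sin (D/2 - sqrt (E0 - D\<^sup>2/2))) \<le> K"
      using K_freq unfolding E0_eq_sum by auto
    have spread: "\<phi> t $ a - \<phi> t $ b \<le> D" for a b using conf unfolding confined_def by blast
    have lo: "\<phi> t $ j \<le> \<phi> t $ k" for k using spread[of i k] gap by linarith
    have hi: "\<phi> t $ k \<le> \<phi> t $ i" for k using spread[of k j] gap by linarith
    have energy: "(norm (\<phi> t))\<^sup>2 \<le> E0" using conf unfolding confined_def by blast
    have "rhs (\<phi> t) $ i - rhs (\<phi> t) $ j < 0"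
      by (rule kuramoto_rhs_boundary_diff_neg[where E = E, OF adjacent_sym not_adjacent_self reachable
          D_pos D_le gap lo hi energy E0_ge \<open>E0 < 3/4 * D\<^sup>2\<close> K_pos K_freq_ij K_spread_norm])
    moreover have "(p has_real_derivative rhs (\<phi> t) $ i - rhs (\<phi> t) $ j) (at t within {0..})"
      unfolding p_def using has_real_derivative_phase[OF t, of i] has_real_derivative_phase[OF t, of j]
      by (rule DERIV_diff)
    ultimately obtain d where d: "d > 0" "\<forall>h>0. t + h \<in> {0..} \<longrightarrow> h < d \<longrightarrow> p (t + h) < p t"
      using has_real_derivative_neg_dec_right[of p] by blast
    show ?thesis unfolding eventually_at_right_field
    proof (intro exI[of _ "t + d"] conjI allI impI)
      fix y assume y: "t < y" "y < t + d"
      then have "y - t > 0" "y - t < d" "t + (y - t) \<in> {0..}" using t by auto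
      then have "p (t + (y - t)) < p t" using d(2) by blast
      then show "\<phi> y $ i - \<phi> y $ j \<le> D" using p_le unfolding p_def by simp
    qed (use d in auto)
  qed
qed

lemma confined_extend_right:
  assumes t: "t \<ge> 0" and conf: "confined t"
  shows "\<exists>b>t. \<forall>s\<in>{t..b}. confined s"
proof -
  have "eventually (\<lambda>s. \<forall>i j. \<phi> s $ i - \<phi> s $ j \<le> D) (at_right t)"
    using eventually_phase_gap_le_at_right[OF t conf] by (intro eventually_all_finite) auto
  then obtain b where b: "b > t" "\<forall>y>t. y < b \<longrightarrow> (\<forall>i j. \<phi> y $ i - \<phi> y $ j \<le> D)"
    unfolding eventually_at_right_field by blast
  define b' where "b' = (t + b) / 2"
  have b': "t < b'" "b' < b" using b unfolding b'_def by auto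
  have spread: "\<forall>i j. \<phi> s $ i - \<phi> s $ j \<le> D" if "s \<in> {t..b'}" for s
    using that b b' conf unfolding confined_def by (cases "s = t") auto
  have "\<forall>s\<in>{t..b'}. (norm (\<phi> s))\<^sup>2 \<le> E0"
  proof (rule stays_below_if_DERIV_nonpos_above)
    show "continuous_on {t..b'} (\<lambda>s. (norm (\<phi> s))\<^sup>2)"
      by (rule continuous_on_subset[OF continuous_on_norm_square]) (use t in auto)
    show "(norm (\<phi> t))\<^sup>2 \<le> E0" using conf unfolding confined_def by simp
    fix s assume s: "t < s" "s < b'"
    then show "((\<lambda>s. (norm (\<phi> s))\<^sup>2) has_real_derivative 2 * (\<Sum>i\<in>UNIV. \<phi> s $ i * rhs (\<phi> s) $ i)) (at s)"
      using has_real_derivative_norm_square[of s] t by simp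
    show "E0 < (norm (\<phi> s))\<^sup>2 \<Longrightarrow> 2 * (\<Sum>i\<in>UNIV. \<phi> s $ i * rhs (\<phi> s) $ i) \<le> 0"
      using energy_derivative_nonpos[of s] s t spread[of s] by auto
  qed
  then show ?thesis using spread b' unfolding confined_def by (intro exI[of _ b']) auto
qed

lemma confined_all: "t \<ge> 0 \<Longrightarrow> confined t"
proof (rule ccontr)
  assume t: "t \<ge> 0" "\<not> confined t"
  define \<tau> where "\<tau> = Inf {s. 0 \<le> s \<and> \<not> confined s}"
  have bdd: "bdd_below {s. 0 \<le> s \<and> \<not> confined s}" by (rule bdd_belowI[of _ 0]) auto
  have ne: "{s. 0 \<le> s \<and> \<not> confined s} \<noteq> {}" using t by auto
  have \<tau>_ge: "0 \<le> \<tau>" unfolding \<tau>_def using ne by (intro cInf_greatest) auto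
  have below: "confined s" if "0 \<le> s" "s < \<tau>" for s
  proof (rule ccontr)
    assume "\<not> confined s"
    with that have "\<tau> \<le> s" unfolding \<tau>_def by (intro cInf_lower[OF _ bdd]) simp
    with that show False by simp
  qed
  have "confined \<tau>"
  proof (cases "\<tau> = 0")
    case False
    then have \<tau>_pos: "0 < \<tau>" using \<tau>_ge by simp
    have "\<phi> \<tau> $ i - \<phi> \<tau> $ j \<le> D" for i j
      using le_at_left_limit[OF continuous_on_diff[OF continuous_on_phase continuous_on_phase] \<tau>_pos]
        below unfolding confined_def by blast
    moreover have "(norm (\<phi> \<tau>))\<^sup>2 \<le> E0"
      using le_at_left_limit[OF continuous_on_norm_square \<tau>_pos] below unfolding confined_def by blast
    ultimately show ?thesis unfolding confined_def by auto
  qed (simp add: confined_0)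
  then obtain b where b: "b > \<tau>" "\<forall>s\<in>{\<tau>..b}. confined s" using confined_extend_right[OF \<tau>_ge] by blast
  have "b \<le> \<tau>" unfolding \<tau>_def
  proof (rule cInf_greatest[OF ne])
    fix s assume s: "s \<in> {s. 0 \<le> s \<and> \<not> confined s}"
    then have "\<tau> \<le> s" unfolding \<tau>_def using bdd by (rule cInf_lower)
    moreover have "s \<notin> {\<tau>..b}" using b(2) s by blast
    ultimately show "b \<le> s" by simp
  qed
  then show False using b by simp
qed

lemma phase_spread_le: "t \<ge> 0 \<Longrightarrow> phase_spread (\<phi> t) \<le> D"
  using confined_all phase_spread_le_iff unfolding confined_def by blast

lemma norm_phases_le: "t \<ge> 0 \<Longrightarrow> norm (\<phi> t) \<le> sqrt E0"
  using confined_all[of t] unfolding confined_def by (metis norm_ge_zero real_le_rsqrt)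

lemma V_lower_bound:
  "t \<ge> 0 \<Longrightarrow> - norm w * sqrt E0 - K / (2 * real CARD('n)) * real (card (edges E)) \<le> V t"
proof -
  assume t: "t \<ge> 0"
  have "(\<Sum>i\<in>UNIV. w $ i * \<phi> t $ i) \<le> norm w * norm (\<phi> t)" by (rule sum_mult_le_norm_mult_norm)
  also have "\<dots> \<le> norm w * sqrt E0" using norm_phases_le[OF t] by (intro mult_left_mono) auto
  finally have "(\<Sum>i\<in>UNIV. w $ i * \<phi> t $ i) \<le> norm w * sqrt E0" .
  moreover have "(\<Sum>p\<in>edges E. cos (\<phi> t $ snd p - \<phi> t $ fst p)) \<le> real (card (edges E))"
    using sum_mono[of "edges E" "\<lambda>p. cos (\<phi> t $ snd p - \<phi> t $ fst p)" "\<lambda>_. 1"] by simp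
  then have "K / (2 * real CARD('n)) * (\<Sum>p\<in>edges E. cos (\<phi> t $ snd p - \<phi> t $ fst p))
      \<le> K / (2 * real CARD('n)) * real (card (edges E))"
    using K_pos by (intro mult_left_mono) auto
  ultimately show ?thesis unfolding V_def kuramoto_potential_def by linarith
qed

lemma norm_rhs_ge_away_from_equilibria:
  assumes "0 < \<epsilon>"
  shows "\<exists>\<mu>>0. \<forall>x. norm x \<le> \<rho> \<longrightarrow> \<epsilon> \<le> infdist x {x. rhs x = 0} \<longrightarrow> \<mu> \<le> (norm (rhs x))\<^sup>2"
proof -
  define C where "C = cball 0 \<rho> \<inter> {x. \<epsilon> \<le> infdist x {x. rhs x = 0}}"
  have "compact C" unfolding C_def
    by (intro compact_Int_closed compact_cball closed_Collect_le continuous_intros)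
  show ?thesis
  proof (cases "C = {}")
    case True
    then show ?thesis unfolding C_def by (intro exI[of _ 1]) (auto simp: mem_cball_0)
  next
    case False
    have "continuous_on C (\<lambda>x. (norm (rhs x))\<^sup>2)"
      using continuous_on_subset[OF continuous_on_kuramoto_rhs[of E K w], of C] by (intro continuous_intros) auto
    then obtain x0 where x0: "x0 \<in> C" "\<forall>y\<in>C. (norm (rhs x0))\<^sup>2 \<le> (norm (rhs y))\<^sup>2"
      using continuous_attains_inf[OF \<open>compact C\<close> False] by blast
    have "rhs x0 \<noteq> 0" using x0(1) \<open>0 < \<epsilon>\<close> unfolding C_def by auto
    then show ?thesis using x0 unfolding C_def by (intro exI[of _ "(norm (rhs x0))\<^sup>2"]) (auto simp: mem_cball_0)
  qed
qed

text \<open>The speed is bounded, so the trajectory stays away from the equilibria for a fixed time,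
  during which the speed is bounded away from \<open>0\<close> by compactness.\<close>
lemma uniform_V_drop_away_from_equilibria:
  assumes "0 < \<epsilon>"
  obtains \<mu> h where "0 < \<mu>" "0 < h"
    "\<And>t. 0 \<le> t \<Longrightarrow> \<epsilon> \<le> infdist (\<phi> t) {x. rhs x = 0} \<Longrightarrow> V (t + h) \<le> V t - \<mu> * h"
proof -
  define Z where "Z = {x. rhs x = 0}"
  obtain \<mu> where \<mu>: "\<mu> > 0" "\<And>x. norm x \<le> sqrt E0 \<Longrightarrow> \<epsilon>/2 \<le> infdist x Z \<Longrightarrow> \<mu> \<le> (norm (rhs x))\<^sup>2"
    using norm_rhs_ge_away_from_equilibria[of "\<epsilon>/2" "sqrt E0"] assms unfolding Z_def by auto
  define c where "c = real CARD('n) * (norm w + K)"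
  define h where "h = \<epsilon> / (2 * (c + 1))"
  have c: "0 \<le> c" unfolding c_def using K_pos by simp
  have h: "0 < h" "c * h \<le> \<epsilon>/2" using c assms unfolding h_def by (auto simp: field_simps)
  have drop: "V (t + h) \<le> V t - \<mu> * h" if t: "0 \<le> t" "\<epsilon> \<le> infdist (\<phi> t) Z" for t
  proof (rule V_decrease[OF t(1)])
    fix s assume s: "t < s" "s < t + h"
    have "dist (\<phi> s) (\<phi> t) \<le> c * (s - t)" using phases_lipschitz[of t s] s t unfolding c_def by simp
    also have "\<dots> \<le> c * h" using s c by (intro mult_left_mono) auto
    also have "\<dots> \<le> \<epsilon>/2" by (rule h(2))
    finally have "\<epsilon>/2 \<le> infdist (\<phi> s) Z"
      using infdist_triangle[of "\<phi> t" Z "\<phi> s"] t by (simp add: dist_commute)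
    then show "\<mu> \<le> (norm (rhs (\<phi> s)))\<^sup>2" using \<mu>(2) norm_phases_le[of s] s t by simp
  qed (use h in simp)
  show ?thesis using drop unfolding Z_def by (rule that[OF \<mu>(1) h(1)])
qed

lemma tendsto_infdist_equilibria: "((\<lambda>t. infdist (\<phi> t) {x. rhs x = 0}) \<longlongrightarrow> 0) at_top"
proof (rule tendstoI)
  fix \<epsilon> :: real assume "0 < \<epsilon>"
  then obtain \<mu> h where \<mu>h: "0 < \<mu>" "0 < h"
    and drop: "\<And>t. 0 \<le> t \<Longrightarrow> \<epsilon> \<le> infdist (\<phi> t) {x. rhs x = 0} \<Longrightarrow> V (t + h) \<le> V t - \<mu> * h"
    using uniform_V_drop_away_from_equilibria by metis
  show "eventually (\<lambda>t. dist (infdist (\<phi> t) {x. rhs x = 0}) 0 < \<epsilon>) at_top"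
  proof (rule ccontr)
    assume "\<not> ?thesis"
    then have far: "\<exists>t\<ge>T. \<epsilon> \<le> infdist (\<phi> t) {x. rhs x = 0}" for T
      by (auto simp: eventually_at_top_linorder infdist_nonneg not_less)
    \<comment> \<open>infinitely many drops contradict the lower bound of \<open>V\<close>\<close>
    have iterate: "\<exists>t\<ge>0. V t \<le> V 0 - real k * (\<mu> * h)" for k
    proof (induction k)
      case (Suc k)
      then obtain t where t: "t \<ge> 0" "V t \<le> V 0 - real k * (\<mu> * h)" by blast
      obtain t' where t': "t' \<ge> t" "\<epsilon> \<le> infdist (\<phi> t') {x. rhs x = 0}" using far by blast
      have "V (t' + h) \<le> V t - \<mu> * h" using drop[of t'] V_antimono[of t t'] t t' by simp
      then show ?case using t t' \<mu>h by (intro exI[of _ "t' + h"]) (auto simp: algebra_simps)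
    qed (auto intro: exI[of _ 0])
    define L where "L = - norm w * sqrt E0 - K / (2 * real CARD('n)) * real (card (edges E))"
    obtain k where "(V 0 - L) / (\<mu> * h) < real k" using reals_Archimedean2 by blast
    then have "V 0 - L < real k * (\<mu> * h)" using \<mu>h by (simp add: pos_divide_less_eq)
    moreover obtain t where "t \<ge> 0" "V t \<le> V 0 - real k * (\<mu> * h)" using iterate by blast
    ultimately show False using V_lower_bound[of t] unfolding L_def by linarith
  qed
qed

end

theorem theorem1:
  fixes E :: "'n::finite \<Rightarrow> 'n \<Rightarrow> bool"
    and K D :: real
    and w :: "real^'n"
    and \<phi> :: "real \<Rightarrow> real^'n"
  assumes graph: "undirected_graph E"
    and conn: "graph_connected E"
    and Kpos: "K > 0"
    and wsum: "(\<Sum>i\<in>UNIV. w $ i) = 0"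
    and ode: "\<forall>t\<ge>0. (\<phi> has_vector_derivative kuramoto_rhs E K w (\<phi> t)) (at t within {0..})"
    and init_sum: "(\<Sum>i\<in>UNIV. \<phi> 0 $ i) = 0"
    and D0_pos: "0 < phase_spread (\<phi> 0)"
    and D0_le: "phase_spread (\<phi> 0) \<le> D"
    and D_le: "D \<le> pi / 2"
    and Kstar: "K \<ge> sqrt (\<Sum>i\<in>UNIV. (w $ i)^2) * D
                    / (sqrt (\<Sum>i\<in>UNIV. (\<phi> 0 $ i)^2) * L_const E * sin D)"
    and cond: "((\<Sum>i\<in>UNIV. (\<phi> 0 $ i)^2) < 3/4 * D^2 \<and>
               (\<forall>i j. K \<ge> real CARD('n) * \<bar>w $ i - w $ j\<bar>
                  / (2 * real (min_degree E)
                     * sin (D/2 - sqrt ((\<Sum>i\<in>UNIV. (\<phi> 0 $ i)^2) - D^2/2)))))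
             \<or> (\<Sum>i\<in>UNIV. (\<phi> 0 $ i)^2) < D^2/2"
  shows "(\<forall>t\<ge>0. phase_spread (\<phi> t) \<le> D) \<and>
         ((\<lambda>t. infdist (\<phi> t) {x. kuramoto_rhs E K w x = 0}) \<longlongrightarrow> 0) at_top"
proof -
  interpret kuramoto_spread_bound E K w \<phi> D
    by unfold_locales (fact graph conn Kpos wsum ode init_sum D0_pos D0_le D_le Kstar cond)+
  show ?thesis using phase_spread_le tendsto_infdist_equilibria by blast
qed

end
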